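(* For every integer $n\ge2$, $\mathsf L_{\mathrm{Mon}(R)}(I_{C_n})=[2,n+1]$.
   Context: Let $K$ be a field, $N\ge2$, $R=K[X_1,\dots,X_N]$, $X=X_1$, $Y=X_2$. $\mathrm{Mon}(R)$ is the monoid of nonzero monomial ideals of $R$ under ideal multiplication, with identity $R$ (its only unit); an atom of $\mathrm{Mon}(R)$ is an $I\ne R$ in $\mathrm{Mon}(R)$ not a product of two elements of $\mathrm{Mon}(R)\setminus\{R\}$; $\mathsf L_{\mathrm{Mon}(R)}(I)$ is the set of $k$ such that $I$ is a product of $k$ atoms of $\mathrm{Mon}(R)$. $[x,y]=\{z\in\mathbb Z:x\le z\le y\}$. Fix an integer $n\ge 2$ and positive integers $a_1,\dots,a_{n+1}$ with (C1) $a_{n+1}=a_1+\dots+a_{n-1}+2a_n$ and (C2) $a_{i+1}>2(a_1+\dots+a_i)$ for all $i\in[1,n-1]$. For $I\subseteq[1,n+1]$ put $a_I=\sum_{i\in I}a_i$ ($a_\emptyset=0$). $C_n=\{a_I:I\subseteq[1,n+1]\}$, $\mu=a_{[1,n+1]}$, and $I_{C_n}=\langle X^{\mu-c}Y^c:c\in C_n\rangle$. *)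

theory Defs
  imports "HOL-Library.Poly_Mapping"
begin

text \<open>Polynomials over a field 'k in variables X_1,...,X_N are represented as finitely
supported maps from exponent vectors (nat =>0 nat, variable X_(i+1) has index i) to
coefficients, restricted to exponent vectors supported in {..<N}.\<close>

type_synonym 'k mpoly = "(nat \<Rightarrow>\<^sub>0 nat) \<Rightarrow>\<^sub>0 'k"

definition polyring :: "nat \<Rightarrow> ('k::field) mpoly set" where
  "polyring N = {p::'k mpoly. \<forall>m\<in>Poly_Mapping.keys p. Poly_Mapping.keys m \<subseteq> {..<N}}"

definition is_ideal :: "nat \<Rightarrow> ('k::field) mpoly set \<Rightarrow> bool" where
  "is_ideal N I \<longleftrightarrow> I \<subseteq> polyring N \<and> 0 \<in> I \<and> (\<forall>x\<in>I. \<forall>y\<in>I. x + y \<in> I)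
     \<and> (\<forall>r\<in>polyring N. \<forall>x\<in>I. r * x \<in> I)"

definition gen_ideal :: "nat \<Rightarrow> ('k::field) mpoly set \<Rightarrow> 'k mpoly set" where
  "gen_ideal N S = \<Inter>{I. is_ideal N I \<and> S \<subseteq> I}"

definition mono :: "(nat \<Rightarrow>\<^sub>0 nat) \<Rightarrow> ('k::field) mpoly" where
  "mono m = Poly_Mapping.single m 1"

definition monomial_ideal :: "nat \<Rightarrow> ('k::field) mpoly set \<Rightarrow> bool" where
  "monomial_ideal N I \<longleftrightarrow> (\<exists>M. (\<forall>m\<in>M. Poly_Mapping.keys m \<subseteq> {..<N}) \<and> I = gen_ideal N (mono ` M))"

definition ideal_mult :: "nat \<Rightarrow> ('k::field) mpoly set \<Rightarrow> 'k mpoly set \<Rightarrow> 'k mpoly set" where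
  "ideal_mult N I J = gen_ideal N {x * y | x y. x \<in> I \<and> y \<in> J}"

definition Mon :: "nat \<Rightarrow> ('k::field) mpoly set set" where
  "Mon N = {I. monomial_ideal N I \<and> I \<noteq> {0}}"

definition Mon_atom :: "nat \<Rightarrow> ('k::field) mpoly set \<Rightarrow> bool" where
  "Mon_atom N I \<longleftrightarrow> I \<in> Mon N \<and> I \<noteq> polyring N \<and>
     \<not> (\<exists>A B. A \<in> Mon N - {polyring N} \<and> B \<in> Mon N - {polyring N} \<and> I = ideal_mult N A B)"

definition Mon_lengths :: "nat \<Rightarrow> ('k::field) mpoly set \<Rightarrow> nat set" where
  "Mon_lengths N I = {k. \<exists>as. length as = k \<and> (\<forall>A\<in>set as. Mon_atom N A) \<and>
      I = foldr (ideal_mult N) as (polyring N)}"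

text \<open>X^i Y^j with X = X_1 (index 0), Y = X_2 (index 1).\<close>
definition monoXY :: "nat \<Rightarrow> nat \<Rightarrow> ('k::field) mpoly" where
  "monoXY i j = mono (Poly_Mapping.single 0 i + Poly_Mapping.single 1 j)"

definition Cset :: "(nat \<Rightarrow> nat) \<Rightarrow> nat \<Rightarrow> nat set" where
  "Cset a n = (\<lambda>I. sum a I) ` Pow {1..n+1}"

definition ICn :: "nat \<Rightarrow> (nat \<Rightarrow> nat) \<Rightarrow> nat \<Rightarrow> ('k::field) mpoly set" where
  "ICn N a n = gen_ideal N ((\<lambda>c. monoXY (sum a {1..n+1} - c) c) ` Cset a n)"

end

theory Submission
  imports Defs "HOL-Library.Set_Algebras"
begin

text \<open>
A monomial ideal is determined by the exponent vectors of the monomials it contains, and the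
product of the ideals generated by monomial sets \<open>A\<close> and \<open>B\<close> is generated by the Minkowski sum
\<open>A + B\<close>; so everything reduces to the combinatorics of exponent vectors in \<open>X\<close> and \<open>Y\<close>.

Every length \<open>k = n + 1 - j\<close> with \<open>0 \<le> j \<le> n - 1\<close> is realised by \<open>I\<^sub>C = A\<^sub>j P\<^sub>j\<^sub>+\<^sub>1 \<cdots> P\<^sub>n\<close>,
where \<open>P\<^sub>i = \<langle>X\<^bsup>a\<^sub>i\<^esup>, Y\<^bsup>a\<^sub>i\<^esup>\<rangle>\<close> and \<open>A\<^sub>j\<close> is \<open>I\<^sub>C\<^sub>K\<close> for \<open>K = {1..j, n+1}\<close> together with a
corner monomial \<open>X\<^sup>eY\<^sup>e\<close> that becomes redundant in the product; all factors are atoms by a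
degree argument.

Conversely, in a product of \<open>k\<close> atoms the pure powers \<open>X\<^sup>\<mu>, Y\<^sup>\<mu>\<close> of minimal degree split into
pure powers of the factors, which yields \<open>k\<close> positive degrees all of whose subset sums lie in
\<open>C\<^sub>n\<close>. Since \<open>a\<^sub>1, \<dots>, a\<^sub>n\<close> grow superincreasingly, at most \<open>n + 1\<close> such degrees exist; and
\<open>k \<ge> 2\<close> because \<open>I\<^sub>C\<close> is neither \<open>R\<close> nor an atom.
\<close>

abbreviation lookup where "lookup \<equiv> Poly_Mapping.lookup"
abbreviation keys where "keys \<equiv> Poly_Mapping.keys"
abbreviation single where "single \<equiv> Poly_Mapping.single"

section \<open>Monomial ideals and sets of exponent vectors\<close>

type_synonym monomial = "nat \<Rightarrow>\<^sub>0 nat"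

definition in_vars :: "nat \<Rightarrow> monomial set \<Rightarrow> bool" where
  "in_vars N M \<longleftrightarrow> (\<forall>m\<in>M. keys m \<subseteq> {..<N})"

text \<open>Divisibility of monomials is the pointwise order \<open>lookup g \<le> lookup m\<close> of exponent vectors.\<close>
definition multiples :: "nat \<Rightarrow> monomial set \<Rightarrow> monomial set" where
  "multiples N M = {m. keys m \<subseteq> {..<N} \<and> (\<exists>g\<in>M. lookup g \<le> lookup m)}"

lemma keys_add_monomial: "keys ((u::monomial) + v) = keys u \<union> keys v"
  by (auto simp: in_keys_iff lookup_add)

lemma lookup_le_add_mono:
  fixes u v u' v' :: monomial
  shows "lookup u \<le> lookup v \<Longrightarrow> lookup u' \<le> lookup v' \<Longrightarrow> lookup (u + u') \<le> lookup (v + v')"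
  by (simp add: le_fun_def lookup_add add_mono)

lemma lookup_le_add_left: "lookup (v::monomial) \<le> lookup (u + v)"
  by (simp add: le_fun_def lookup_add)

lemma lookup_le_addD: "lookup ((u::monomial) + u') \<le> lookup v \<Longrightarrow> lookup u \<le> lookup v"
  by (auto simp: le_fun_def lookup_add intro: add_leD1)

lemma lookup_le_zero_iff: "lookup (g::monomial) \<le> lookup 0 \<longleftrightarrow> g = 0"
  by (auto simp: le_fun_def intro: poly_mapping_eqI)

lemma in_vars_plus: "in_vars N A \<Longrightarrow> in_vars N B \<Longrightarrow> in_vars N (A + B)"
  unfolding in_vars_def set_plus_def by (fastforce simp: keys_add_monomial)

lemma in_vars_zero: "in_vars N {0}"
  by (simp add: in_vars_def)

lemma multiples_base: "in_vars N M \<Longrightarrow> g \<in> M \<Longrightarrow> g \<in> multiples N M"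
  unfolding multiples_def in_vars_def by blast

lemma multiples_plus:
  assumes "u \<in> multiples N A" "v \<in> multiples N B"
  shows "u + v \<in> multiples N (A + B)"
proof -
  obtain g where "g \<in> A" "lookup g \<le> lookup u" "keys u \<subseteq> {..<N}"
    using assms(1) unfolding multiples_def by blast
  moreover obtain h where "h \<in> B" "lookup h \<le> lookup v" "keys v \<subseteq> {..<N}"
    using assms(2) unfolding multiples_def by blast
  ultimately show ?thesis
    unfolding multiples_def by (auto simp: keys_add_monomial intro!: lookup_le_add_mono)
qed

lemma multiples_zero_iff:
  assumes "in_vars N M"
  shows "multiples N M = multiples N {0} \<longleftrightarrow> 0 \<in> M"
proof
  assume "multiples N M = multiples N {0}"
  then have "0 \<in> multiples N M"
    by (simp add: multiples_def)
  then show "0 \<in> M"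
    unfolding multiples_def by (auto simp: lookup_le_zero_iff)
qed (auto simp: multiples_def le_fun_def intro!: bexI[of _ 0])

lemma multiples_absorb:
  assumes "B \<subseteq> multiples N A"
  shows "multiples N (A \<union> B) = multiples N A"
proof
  show "multiples N (A \<union> B) \<subseteq> multiples N A"
  proof
    fix m assume "m \<in> multiples N (A \<union> B)"
    then obtain g where g: "g \<in> A \<union> B" "lookup g \<le> lookup m" and m: "keys m \<subseteq> {..<N}"
      unfolding multiples_def by blast
    then obtain g' where "g' \<in> A" "lookup g' \<le> lookup g"
      using assms unfolding multiples_def by blast
    then show "m \<in> multiples N A"
      using g(2) m unfolding multiples_def by (blast intro: order_trans)
  qed
qed (auto simp: multiples_def)

lemma polyring_add: "p \<in> polyring N \<Longrightarrow> q \<in> polyring N \<Longrightarrow> p + q \<in> polyring N"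
  unfolding polyring_def using keys_add[of p q] by blast

lemma polyring_mult:
  assumes "(p::'k::field mpoly) \<in> polyring N" "q \<in> polyring N"
  shows "p * q \<in> polyring N"
  unfolding polyring_def mem_Collect_eq
proof
  fix m assume "m \<in> keys (p * q)"
  then obtain x y where "m = x + y" "x \<in> keys p" "y \<in> keys q"
    using keys_mult[of p q] by blast
  then show "keys m \<subseteq> {..<N}"
    using assms by (auto simp: polyring_def keys_add_monomial)
qed

lemma is_ideal_polyring: "is_ideal N (polyring N :: 'k::field mpoly set)"
proof -
  have "0 \<in> (polyring N :: 'k mpoly set)"
    by (simp add: polyring_def)
  then show ?thesis
    unfolding is_ideal_def using polyring_add polyring_mult by blast
qed

lemma gen_ideal_is_ideal:
  assumes "S \<subseteq> polyring N"
  shows "is_ideal N (gen_ideal N (S::'k::field mpoly set))"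
proof -
  let ?F = "{I. is_ideal N I \<and> S \<subseteq> I}"
  have "polyring N \<in> ?F"
    using assms is_ideal_polyring by blast
  then have "\<Inter>?F \<subseteq> polyring N"
    by blast
  moreover have "0 \<in> \<Inter>?F" "\<forall>x\<in>\<Inter>?F. \<forall>y\<in>\<Inter>?F. x + y \<in> \<Inter>?F"
    "\<forall>r\<in>polyring N. \<forall>x\<in>\<Inter>?F. r * x \<in> \<Inter>?F"
    by (auto simp: is_ideal_def)
  ultimately show ?thesis
    unfolding gen_ideal_def is_ideal_def[of N "\<Inter>?F"] by blast
qed

lemma gen_ideal_least: "is_ideal N I \<Longrightarrow> S \<subseteq> I \<Longrightarrow> gen_ideal N S \<subseteq> I"
  unfolding gen_ideal_def by blast

lemma gen_ideal_base: "x \<in> S \<Longrightarrow> x \<in> gen_ideal N S"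
  unfolding gen_ideal_def by blast

lemma is_ideal_sum: "is_ideal N I \<Longrightarrow> (\<And>x. x \<in> A \<Longrightarrow> f x \<in> I) \<Longrightarrow> sum f A \<in> I"
  by (induction A rule: infinite_finite_induct) (auto simp: is_ideal_def)

lemma poly_mapping_sum_single: "(p::'k::field mpoly) = (\<Sum>m\<in>keys p. single m (lookup p m))"
proof (rule poly_mapping_eqI)
  fix k
  have "lookup (\<Sum>m\<in>keys p. single m (lookup p m)) k = (\<Sum>m\<in>keys p. if m = k then lookup p m else 0)"
    by (simp add: lookup_sum lookup_single when_def eq_commute)
  then show "lookup p k = lookup (\<Sum>m\<in>keys p. single m (lookup p m)) k"
    by (simp add: in_keys_iff)
qed

lemma keys_mono: "keys (mono m :: 'k::field mpoly) = {m}"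
  by (simp add: mono_def)

lemma is_ideal_supported_multiples:
  assumes "in_vars N M"
  shows "is_ideal N {p::'k::field mpoly. keys p \<subseteq> multiples N M}"
proof -
  let ?Z = "{p::'k mpoly. keys p \<subseteq> multiples N M}"
  have "r * x \<in> ?Z" if r: "r \<in> polyring N" and x: "x \<in> ?Z" for r x
  proof -
    have "a + b \<in> multiples N M" if a: "a \<in> keys r" and b: "b \<in> keys x" for a b
    proof -
      have "keys a \<subseteq> {..<N}"
        using r a by (auto simp: polyring_def)
      moreover obtain g where g: "g \<in> M" "lookup g \<le> lookup b" and "keys b \<subseteq> {..<N}"
        using x b by (auto simp: multiples_def)
      moreover have "lookup g \<le> lookup (a + b)"
        using g(2) lookup_le_add_left by (rule order_trans)
      ultimately show ?thesis
        unfolding multiples_def mem_Collect_eq keys_add_monomial using g(1) by blast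
    qed
    with keys_mult[of r x] show ?thesis
      by auto
  qed
  moreover have "x + y \<in> ?Z" if "x \<in> ?Z" "y \<in> ?Z" for x y
    using that keys_add[of x y] by blast
  moreover have "?Z \<subseteq> polyring N"
    by (auto simp: polyring_def multiples_def)
  moreover have "0 \<in> ?Z"
    by simp
  ultimately show ?thesis
    unfolding is_ideal_def by blast
qed

theorem gen_ideal_monomials:
  assumes M: "in_vars N M"
  shows "gen_ideal N (mono ` M :: 'k::field mpoly set) = {p. keys p \<subseteq> multiples N M}"
proof
  show "gen_ideal N (mono ` M :: 'k mpoly set) \<subseteq> {p. keys p \<subseteq> multiples N M}"
    by (rule gen_ideal_least[OF is_ideal_supported_multiples[OF M]])
      (use M in \<open>auto simp: mono_def multiples_def in_vars_def\<close>)
next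
  have ideal: "is_ideal N (gen_ideal N (mono ` M :: 'k mpoly set))"
    by (rule gen_ideal_is_ideal) (use M in \<open>auto simp: polyring_def mono_def in_vars_def\<close>)
  have term_in: "single m c \<in> gen_ideal N (mono ` M :: 'k mpoly set)"
    if m: "m \<in> multiples N M" for m c
  proof -
    obtain g where g: "g \<in> M" "lookup g \<le> lookup m" and km: "keys m \<subseteq> {..<N}"
      using m by (auto simp: multiples_def)
    have "m - g + g = m"
      using g(2) by (intro poly_mapping_eqI) (simp add: lookup_add lookup_minus le_fun_def)
    then have "single m c = single (m - g) c * (mono g :: 'k mpoly)"
      by (simp add: mono_def mult_single)
    moreover have "keys (m - g) \<subseteq> keys m"
      by (auto simp: in_keys_iff lookup_minus)
    then have "single (m - g) c \<in> (polyring N :: 'k mpoly set)"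
      using km by (auto simp: polyring_def)
    moreover have "mono g \<in> gen_ideal N (mono ` M :: 'k mpoly set)"
      using g(1) by (blast intro: gen_ideal_base)
    ultimately show ?thesis
      using ideal unfolding is_ideal_def by metis
  qed
  show "{p. keys p \<subseteq> multiples N M} \<subseteq> gen_ideal N (mono ` M :: 'k mpoly set)"
  proof
    fix p :: "'k mpoly" assume "p \<in> {p. keys p \<subseteq> multiples N M}"
    then have "(\<Sum>m\<in>keys p. single m (lookup p m)) \<in> gen_ideal N (mono ` M)"
      by (auto intro!: is_ideal_sum[OF ideal] term_in)
    then show "p \<in> gen_ideal N (mono ` M)"
      using poly_mapping_sum_single[of p] by simp
  qed
qed

lemma gen_ideal_monomials_eq_iff:
  assumes "in_vars N M" "in_vars N M'"
  shows "(gen_ideal N (mono ` M) :: 'k::field mpoly set) = gen_ideal N (mono ` M')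
    \<longleftrightarrow> multiples N M = multiples N M'"
proof
  assume eq: "(gen_ideal N (mono ` M) :: 'k mpoly set) = gen_ideal N (mono ` M')"
  show "multiples N M = multiples N M'"
  proof (rule set_eqI)
    fix m
    have "(mono m :: 'k mpoly) \<in> gen_ideal N (mono ` M) \<longleftrightarrow> (mono m :: 'k mpoly) \<in> gen_ideal N (mono ` M')"
      using eq by simp
    then show "m \<in> multiples N M \<longleftrightarrow> m \<in> multiples N M'"
      by (simp add: gen_ideal_monomials[OF assms(1)] gen_ideal_monomials[OF assms(2)] keys_mono)
  qed
qed (simp add: gen_ideal_monomials[OF assms(1)] gen_ideal_monomials[OF assms(2)])

theorem ideal_mult_gen_ideal_monomials:
  assumes A: "in_vars N A" and B: "in_vars N B"
  shows "ideal_mult N (gen_ideal N (mono ` A)) (gen_ideal N (mono ` B))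
    = (gen_ideal N (mono ` (A + B)) :: 'k::field mpoly set)"
proof -
  let ?GA = "gen_ideal N (mono ` A) :: 'k mpoly set"
  let ?GB = "gen_ideal N (mono ` B) :: 'k mpoly set"
  let ?S = "{x * y |x y. x \<in> ?GA \<and> y \<in> ?GB}"
  have AB: "in_vars N (A + B)" using A B by (rule in_vars_plus)
  have "?S \<subseteq> {p. keys p \<subseteq> multiples N (A + B)}"
  proof clarify
    fix x y m assume "x \<in> ?GA" "y \<in> ?GB" "m \<in> keys (x * y)"
    then show "m \<in> multiples N (A + B)"
      using keys_mult[of x y] multiples_plus
      by (fastforce simp: gen_ideal_monomials[OF A] gen_ideal_monomials[OF B])
  qed
  then have "ideal_mult N ?GA ?GB \<subseteq> gen_ideal N (mono ` (A + B))"
    unfolding ideal_mult_def gen_ideal_monomials[OF AB]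
    by (rule gen_ideal_least[OF is_ideal_supported_multiples[OF AB]])
  moreover have "gen_ideal N (mono ` (A + B)) \<subseteq> ideal_mult N ?GA ?GB"
    unfolding ideal_mult_def
  proof (rule gen_ideal_least[OF gen_ideal_is_ideal])
    have "?GA \<subseteq> polyring N" "?GB \<subseteq> polyring N"
      by (auto simp: gen_ideal_monomials[OF A] gen_ideal_monomials[OF B] polyring_def multiples_def)
    then show "?S \<subseteq> polyring N"
      by (auto intro: polyring_mult)
    have "mono (a + b) \<in> ?S" if "a \<in> A" "b \<in> B" for a b
      using that by (auto simp: mono_def mult_single intro!: exI gen_ideal_base)
    then show "mono ` (A + B) \<subseteq> gen_ideal N ?S"
      by (auto elim!: set_plus_elim intro: gen_ideal_base)
  qed
  ultimately show ?thesis by blast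
qed

lemma polyring_eq_gen_ideal_zero: "polyring N = (gen_ideal N (mono ` {0}) :: 'k::field mpoly set)"
  unfolding gen_ideal_monomials[OF in_vars_zero]
  by (auto simp: polyring_def multiples_def le_fun_def)

lemma gen_ideal_monomials_eq_polyring_iff:
  assumes "in_vars N M"
  shows "(gen_ideal N (mono ` M) :: 'k::field mpoly set) = polyring N \<longleftrightarrow> 0 \<in> M"
  using gen_ideal_monomials_eq_iff[OF assms in_vars_zero] multiples_zero_iff[OF assms]
  by (simp add: polyring_eq_gen_ideal_zero)

lemma ideal_mult_polyring:
  assumes "in_vars N M"
  shows "ideal_mult N (gen_ideal N (mono ` M)) (polyring N) = (gen_ideal N (mono ` M) :: 'k::field mpoly set)"
  using ideal_mult_gen_ideal_monomials[OF assms in_vars_zero, where 'k='k]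
    polyring_eq_gen_ideal_zero[of N, where 'k='k] by simp

lemma Mon_obtain:
  assumes "(I :: 'k::field mpoly set) \<in> Mon N"
  obtains M where "in_vars N M" "M \<noteq> {}" "I = gen_ideal N (mono ` M)"
proof -
  obtain M where M: "in_vars N M" "I = gen_ideal N (mono ` M)" "I \<noteq> {0}"
    using assms by (auto simp: Mon_def monomial_ideal_def in_vars_def)
  have "M \<noteq> {}"
  proof
    assume "M = {}"
    then have "I = {0}"
      using M(2) gen_ideal_monomials[of N "{}", where 'k='k] by (auto simp: in_vars_def multiples_def)
    then show False using M(3) by contradiction
  qed
  then show thesis using M that by blast
qed

lemma gen_ideal_monomials_in_Mon:
  assumes "in_vars N M" "M \<noteq> {}"
  shows "(gen_ideal N (mono ` M) :: 'k::field mpoly set) \<in> Mon N"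
proof -
  obtain g where "g \<in> M" using assms(2) by blast
  then have "(mono g :: 'k mpoly) \<in> gen_ideal N (mono ` M)"
    by (blast intro: gen_ideal_base)
  moreover have "(mono g :: 'k mpoly) \<noteq> 0"
    using keys_mono[of g, where 'k='k] by force
  ultimately have "(gen_ideal N (mono ` M) :: 'k mpoly set) \<noteq> {0}"
    by blast
  then show ?thesis
    using assms(1) unfolding Mon_def monomial_ideal_def in_vars_def by blast
qed

lemma Mon_atom_obtain:
  assumes "Mon_atom N (A :: 'k::field mpoly set)"
  obtains M where "in_vars N M" "M \<noteq> {}" "0 \<notin> M" "A = gen_ideal N (mono ` M)"
proof -
  obtain M where M: "in_vars N M" "M \<noteq> {}" "A = gen_ideal N (mono ` M)"
    using assms Mon_obtain unfolding Mon_atom_def by blast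
  moreover have "0 \<notin> M"
    using assms M gen_ideal_monomials_eq_polyring_iff[OF M(1), where 'k='k]
    unfolding Mon_atom_def by blast
  ultimately show thesis using that by blast
qed

lemma foldr_ideal_mult_Mon:
  assumes "\<forall>A\<in>set As. (A :: 'k::field mpoly set) \<in> Mon N"
  obtains M where "in_vars N M" "M \<noteq> {}" "foldr (ideal_mult N) As (polyring N) = gen_ideal N (mono ` M)"
  using assms
proof (induction As arbitrary: thesis)
  case Nil
  show ?case
    by (rule Nil.prems(1)[OF in_vars_zero]) (simp_all add: polyring_eq_gen_ideal_zero)
next
  case (Cons A As)
  obtain MB where B: "in_vars N MB" "MB \<noteq> {}"
    "foldr (ideal_mult N) As (polyring N) = gen_ideal N (mono ` MB)"
    using Cons.IH Cons.prems(2) by auto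
  obtain MA where A: "in_vars N MA" "MA \<noteq> {}" "A = gen_ideal N (mono ` MA)"
    using Mon_obtain Cons.prems(2) by auto
  have "foldr (ideal_mult N) (A # As) (polyring N) = gen_ideal N (mono ` (MA + MB))"
    using ideal_mult_gen_ideal_monomials[OF A(1) B(1)] A(3) B(3) by simp
  moreover have "MA + MB \<noteq> {}"
    using A(2) B(2) by (auto simp: set_plus_def)
  ultimately show ?case
    using Cons.prems(1) in_vars_plus[OF A(1) B(1)] by blast
qed

section \<open>Exponent vectors in \<open>X\<close> and \<open>Y\<close>\<close>

definition total_deg :: "monomial \<Rightarrow> nat" where
  "total_deg m = sum (lookup m) (keys m)"

lemma total_deg_add: "total_deg (u + v) = total_deg u + total_deg v"
  unfolding total_deg_def using setsum_keys_plus_distrib[of "\<lambda>k x. x" u v] by simp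

lemma total_deg_mono:
  assumes "lookup u \<le> lookup v"
  shows "total_deg u \<le> total_deg v"
proof -
  have "v = u + (v - u)"
    using assms by (intro poly_mapping_eqI) (simp add: lookup_add lookup_minus le_fun_def)
  then show ?thesis
    by (metis total_deg_add le_add1)
qed

definition XY :: "nat \<Rightarrow> nat \<Rightarrow> monomial" where
  "XY i j = single 0 i + single 1 j"

lemma lookup_XY: "lookup (XY i j) k = (if k = 0 then i else if k = 1 then j else 0)"
  by (simp add: XY_def lookup_add lookup_single when_def)

lemma XY_add: "XY i j + XY i' j' = XY (i + i') (j + j')"
  by (intro poly_mapping_eqI) (simp add: lookup_add lookup_XY)

lemma XY_eq_0_iff: "XY i j = 0 \<longleftrightarrow> i = 0 \<and> j = 0"
proof
  assume "XY i j = 0"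
  then have "lookup (XY i j) 0 = 0" "lookup (XY i j) 1 = 0"
    by simp_all
  then show "i = 0 \<and> j = 0"
    by (simp add: lookup_XY)
qed (simp add: XY_def)

lemma zero_eq_XY_iff: "0 = XY i j \<longleftrightarrow> i = 0 \<and> j = 0"
  using XY_eq_0_iff by metis

lemma total_deg_XY: "total_deg (XY i j) = i + j"
  unfolding XY_def total_deg_add by (simp add: total_deg_def)

lemma keys_XY: "2 \<le> N \<Longrightarrow> keys (XY i j) \<subseteq> {..<N}"
  by (auto simp: in_keys_iff lookup_XY split: if_splits)

lemma in_vars_XY_image: "2 \<le> N \<Longrightarrow> in_vars N ((\<lambda>c. XY (f c) (g c)) ` S)"
  unfolding in_vars_def using keys_XY by blast

lemma lookup_le_XY_iff: "lookup (XY i j) \<le> lookup (XY i' j') \<longleftrightarrow> i \<le> i' \<and> j \<le> j'"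
  unfolding le_fun_def lookup_XY by (metis le_refl zero_neq_one)

lemma lookup_le_XY:
  assumes "lookup w \<le> lookup (XY i j)"
  shows "w = XY (lookup w 0) (lookup w 1)"
proof (rule poly_mapping_eqI)
  fix k
  show "lookup w k = lookup (XY (lookup w 0) (lookup w 1)) k"
    using assms[unfolded le_fun_def, rule_format, of k] by (auto simp: lookup_XY split: if_splits)
qed

lemma lookup_le_X_power:
  assumes "lookup w \<le> lookup (XY i 0)"
  shows "w = XY (total_deg w) 0"
proof -
  have "lookup w 1 = 0"
    using assms by (simp add: le_fun_def lookup_XY del: One_nat_def) (metis le_zero_eq zero_neq_one)
  then obtain x where "w = XY x 0"
    using lookup_le_XY[OF assms] by metis
  then show ?thesis
    by (simp add: total_deg_XY)
qed

lemma lookup_le_Y_power: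
  assumes "lookup w \<le> lookup (XY 0 j)"
  shows "w = XY 0 (total_deg w)"
proof -
  have "lookup w 0 = 0"
    using assms by (simp add: le_fun_def lookup_XY) (metis le_zero_eq)
  then obtain y where "w = XY 0 y"
    using lookup_le_XY[OF assms] by metis
  then show ?thesis
    by (simp add: total_deg_XY)
qed

section \<open>Subset sums\<close>

fun subsums :: "nat list \<Rightarrow> nat set" where
  "subsums [] = {0}"
| "subsums (x # xs) = subsums xs \<union> (\<lambda>y. x + y) ` subsums xs"

lemma zero_in_subsums: "0 \<in> subsums xs"
  by (induction xs) auto

lemma mem_subsums: "x \<in> set xs \<Longrightarrow> x \<in> subsums xs"
  by (induction xs) (auto intro: zero_in_subsums rev_image_eqI)

lemma sum_list_in_subsums: "sum_list xs \<in> subsums xs"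
  by (induction xs) auto

lemma subsums_le_sum_list: "\<sigma> \<in> subsums xs \<Longrightarrow> \<sigma> \<le> sum_list xs"
  by (induction xs arbitrary: \<sigma>) (auto intro: trans_le_add2)

lemma subsums_filter:
  "\<sigma>\<^sub>1 \<in> subsums (filter P xs) \<Longrightarrow> \<sigma>\<^sub>2 \<in> subsums (filter (\<lambda>x. \<not> P x) xs) \<Longrightarrow> \<sigma>\<^sub>1 + \<sigma>\<^sub>2 \<in> subsums xs"
proof (induction xs arbitrary: \<sigma>\<^sub>1 \<sigma>\<^sub>2)
  case (Cons x xs)
  then show ?case
    by (cases "P x") (auto simp: add.assoc add.left_commute)
qed simp

lemma subsums_filter_subset: "subsums (filter P xs) \<subseteq> subsums xs"
  using subsums_filter[of _ P xs 0] zero_in_subsums by fastforce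

text \<open>Adding a summand \<open>\<le> s\<close> to a sum \<open>\<le> s\<close> cannot jump over the gap \<open>(s, 2s]\<close>.\<close>
lemma subsums_below_gap:
  assumes "\<forall>x\<in>set xs. x \<le> s" and "\<forall>\<sigma>\<in>subsums xs. \<sigma> \<le> s \<or> 2 * s < \<sigma>"
  shows "\<sigma> \<in> subsums xs \<Longrightarrow> \<sigma> \<le> s"
proof -
  have "sum_list xs \<le> s"
    using assms
  proof (induction xs)
    case (Cons x xs)
    then have "sum_list xs \<le> s" by auto
    then show ?case
      using Cons.prems sum_list_in_subsums[of "x # xs"] by force
  qed simp
  then show "\<sigma> \<in> subsums xs \<Longrightarrow> \<sigma> \<le> s"
    using subsums_le_sum_list by fastforce
qed

lemma length_mult_le_sum_list: "(\<forall>x\<in>set xs. u \<le> x) \<Longrightarrow> length xs * u \<le> sum_list xs"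
  by (induction xs) auto

definition subset_sums :: "(nat \<Rightarrow> nat) \<Rightarrow> nat \<Rightarrow> nat set" where
  "subset_sums a m = (\<lambda>I. sum a I) ` Pow {1..m}"

text \<open>The factor \<open>2\<close> (instead of the usual \<open>1\<close>) makes even sums of two subset sums unique,
  see \<open>superincreasing_sum_pair_count\<close>.\<close>
definition superincreasing :: "(nat \<Rightarrow> nat) \<Rightarrow> nat \<Rightarrow> bool" where
  "superincreasing a m \<longleftrightarrow> (\<forall>i<m. 2 * sum a {1..i} < a (Suc i))"

lemma superincreasing_Suc: "superincreasing a (Suc m) \<Longrightarrow> superincreasing a m"
  by (simp add: superincreasing_def)

lemma subset_sums_0: "subset_sums a 0 = {0}"
  by (simp add: subset_sums_def)

lemma subset_sums_Suc:
  "subset_sums a (Suc m) = subset_sums a m \<union> (\<lambda>x. a (Suc m) + x) ` subset_sums a m"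
proof -
  have "Pow {1..Suc m} = Pow {1..m} \<union> insert (Suc m) ` Pow {1..m}"
    by (simp add: atLeastAtMostSuc_conv Pow_insert)
  moreover have "sum a (insert (Suc m) I) = a (Suc m) + sum a I" if "I \<subseteq> {1..m}" for I
    using that by (subst sum.insert) (auto intro: finite_subset)
  ultimately show ?thesis
    unfolding subset_sums_def by (auto simp: image_Un image_image)
qed

lemma sum_subset_insert_cases:
  assumes "finite J" "L \<subseteq> insert k J"
  shows "sum a L \<le> sum a J \<or> (a k :: nat) \<le> sum a L"
proof (cases "k \<in> L")
  case True
  then show ?thesis
    using assms finite_subset[of L "insert k J"] member_le_sum[of k L a] by auto
next
  case False
  then show ?thesis
    using assms by (auto intro: sum_mono2)
qed

lemma subset_sumsE:
  assumes "x \<in> subset_sums a m"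
  obtains I where "I \<subseteq> {1..m}" "x = sum a I"
  using assms unfolding subset_sums_def by blast

lemma subset_sums_le: "x \<in> subset_sums a m \<Longrightarrow> x \<le> sum a {1..m}"
  unfolding subset_sums_def by (auto intro: sum_mono2)

lemma subset_sums_Suc_below:
  "x \<in> subset_sums a (Suc m) \<Longrightarrow> x < a (Suc m) \<Longrightarrow> x \<in> subset_sums a m"
  by (auto simp: subset_sums_Suc)

lemma subset_sums_Suc_cases:
  assumes "superincreasing a (Suc m)" "x \<in> subset_sums a (Suc m)"
  shows "x \<le> sum a {1..m} \<or> a (Suc m) \<le> x \<and> x \<le> a (Suc m) + sum a {1..m}"
  using assms by (auto simp: subset_sums_Suc dest: subset_sums_le)

lemma superincreasing_subsums_length:
  "superincreasing a m \<Longrightarrow> \<forall>x\<in>set xs. 0 < x \<Longrightarrow> subsums xs \<subseteq> subset_sums a m \<Longrightarrow> length xs \<le> m"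
proof (induction m arbitrary: xs)
  case 0
  show ?case
  proof (cases xs)
    case (Cons x ys)
    then have "x \<in> subsums xs"
      using mem_subsums[of x xs] by simp
    then show ?thesis
      using 0 Cons by (auto simp: subset_sums_0)
  qed simp
next
  case (Suc m)
  define A where "A = a (Suc m)"
  define s where "s = sum a {1..m}"
  have As: "2 * s < A"
    using Suc.prems(1) by (simp add: superincreasing_def A_def s_def)
  have cases: "x \<le> s \<or> A \<le> x \<and> x \<le> A + s" if "x \<in> subset_sums a (Suc m)" for x
    using subset_sums_Suc_cases[OF Suc.prems(1) that] by (simp add: A_def s_def)
  define ws where "ws = filter (\<lambda>x. A \<le> x) xs"
  define zs where "zs = filter (\<lambda>x. \<not> A \<le> x) xs"
  have "length ws * A \<le> sum_list ws"
    by (rule length_mult_le_sum_list) (simp add: ws_def)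
  moreover have "sum_list ws \<in> subset_sums a (Suc m)"
    using sum_list_in_subsums[of ws] subsums_filter_subset[of "\<lambda>x. A \<le> x" xs] Suc.prems(3)
    unfolding ws_def by blast
  then have "sum_list ws \<le> A + s"
    using subset_sums_le[of _ a "Suc m"] by (simp add: A_def s_def add.commute)
  ultimately have "length ws * A < 2 * A"
    using As by linarith
  then have "length ws \<le> 1"
    by simp
  moreover
  have zs_sub: "subsums zs \<subseteq> subset_sums a (Suc m)"
    using subsums_filter_subset Suc.prems(3) unfolding zs_def by blast
  have "\<forall>x\<in>set zs. x \<le> s"
    using cases zs_sub mem_subsums unfolding zs_def by fastforce
  then have "\<sigma> \<le> s" if "\<sigma> \<in> subsums zs" for \<sigma>
    using subsums_below_gap[of zs s] cases zs_sub that As by fastforce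
  then have "subsums zs \<subseteq> subset_sums a m"
    using zs_sub As subset_sums_Suc_below unfolding A_def by fastforce
  then have "length zs \<le> m"
    using Suc.IH[OF superincreasing_Suc[OF Suc.prems(1)]] Suc.prems(2) zs_def by auto
  ultimately show ?case
    using sum_length_filter_compl[of "\<lambda>x. A \<le> x" xs] unfolding ws_def zs_def by linarith
qed

lemma sum_remove_top:
  assumes "I \<subseteq> {1..Suc m}"
  shows "sum a I = sum a (I - {Suc m}) + (if Suc m \<in> I then a (Suc m) else 0)"
proof (cases "Suc m \<in> I")
  case True
  moreover have "finite I"
    using assms finite_subset by blast
  ultimately show ?thesis
    using sum.remove[of I "Suc m" a] by (simp add: add.commute)
qed simp

lemma superincreasing_sum_pair_count:
  "superincreasing a m \<Longrightarrow> I \<subseteq> {1..m} \<Longrightarrow> J \<subseteq> {1..m} \<Longrightarrow> K \<subseteq> {1..m} \<Longrightarrow> L \<subseteq> {1..m} \<Longrightarrow>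
   sum a I + sum a J = sum a K + sum a L \<Longrightarrow>
   of_bool (t \<in> I) + of_bool (t \<in> J) = (of_bool (t \<in> K) + of_bool (t \<in> L) :: nat)"
proof (induction m arbitrary: I J K L)
  case 0
  then show ?case by auto
next
  case (Suc m)
  define A where "A = a (Suc m)"
  define s where "s = sum a {1..m}"
  have As: "2 * s < A"
    using Suc.prems(1) by (simp add: superincreasing_def A_def s_def)
  have sub: "X - {Suc m} \<subseteq> {1..m}" if "X \<subseteq> {1..Suc m}" for X
    using that by auto
  have le: "sum a (X - {Suc m}) \<le> s" if "X \<subseteq> {1..Suc m}" for X
    unfolding s_def using that by (intro sum_mono2) auto
  have split: "sum a X = sum a (X - {Suc m}) + (if Suc m \<in> X then A else 0)"
    if "X \<subseteq> {1..Suc m}" for X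
    unfolding A_def using that by (rule sum_remove_top)
  note bounds = le[OF Suc.prems(2)] le[OF Suc.prems(3)] le[OF Suc.prems(4)] le[OF Suc.prems(5)]
  have "sum a (I - {Suc m}) + (if Suc m \<in> I then A else 0) + (sum a (J - {Suc m}) + (if Suc m \<in> J then A else 0))
      = sum a (K - {Suc m}) + (if Suc m \<in> K then A else 0) + (sum a (L - {Suc m}) + (if Suc m \<in> L then A else 0))"
    using Suc.prems(6) split[OF Suc.prems(2)] split[OF Suc.prems(3)] split[OF Suc.prems(4)]
      split[OF Suc.prems(5)] by simp
  \<comment> \<open>the top element is counted equally often on both sides since \<open>A\<close> exceeds twice the rest\<close>
  then have top: "of_bool (Suc m \<in> I) + of_bool (Suc m \<in> J) = (of_bool (Suc m \<in> K) + of_bool (Suc m \<in> L) :: nat)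
     \<and> sum a (I - {Suc m}) + sum a (J - {Suc m}) = sum a (K - {Suc m}) + sum a (L - {Suc m})"
    using bounds As
    by (cases "Suc m \<in> I"; cases "Suc m \<in> J"; cases "Suc m \<in> K"; cases "Suc m \<in> L"; simp; linarith)
  show ?case
  proof (cases "t = Suc m")
    case False
    then show ?thesis
      using Suc.IH[OF superincreasing_Suc[OF Suc.prems(1)] sub[OF Suc.prems(2)] sub[OF Suc.prems(3)]
          sub[OF Suc.prems(4)] sub[OF Suc.prems(5)]] top
      by simp
  qed (use top in simp)
qed

text \<open>An element of \<open>X\<close> lies neither in \<open>I\<^sub>1\<close> nor in \<open>I\<^sub>2\<close>, but is counted once on the right of
  the last equation.\<close>
lemma superincreasing_sums_cover_absurd:
  assumes "superincreasing a m" and sets: "X \<subseteq> {1..m}" "I1 \<subseteq> {1..m}" "I2 \<subseteq> {1..m}"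
      "Y1 \<subseteq> {1..m}" "Y2 \<subseteq> {1..m}" "K \<subseteq> {1..m}" and "X \<noteq> {}"
    and "sum a X + sum a I1 = sum a Y1" "sum a X + sum a I2 = sum a Y2"
      "sum a I1 + sum a I2 = sum a {1..m} + sum a K"
  shows False
proof -
  obtain t where t: "t \<in> X"
    using \<open>X \<noteq> {}\<close> by blast
  note count = superincreasing_sum_pair_count[OF assms(1), of _ _ _ _ t]
  have "t \<notin> I1"
    using count[OF sets(1,2,4) empty_subsetI] assms(9) t by (cases "t \<in> Y1") auto
  moreover have "t \<notin> I2"
    using count[OF sets(1,3,5) empty_subsetI] assms(10) t by (cases "t \<in> Y2") auto
  moreover have "t \<in> {1..m}"
    using t sets(1) by blast
  ultimately show False
    using count[OF sets(2,3) order_refl sets(6) assms(11)] by (cases "t \<in> K") auto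
qed

locale Cn_weights =
  fixes a :: "nat \<Rightarrow> nat" and n :: nat
  assumes n_ge_2: "2 \<le> n"
    and a_pos: "\<forall>i\<in>{1..n+1}. 0 < a i"
    and a_last: "a (n+1) = sum a {1..n-1} + 2 * a n"
    and a_growth: "\<forall>i\<in>{1..n-1}. 2 * sum a {1..i} < a (i+1)"
begin

definition s where "s = sum a {1..n-1}"
definition u where "u = a n"

lemma superincreasing_below: "superincreasing a (n - 1)"
  unfolding superincreasing_def
proof (intro allI impI)
  fix i assume "i < n - 1"
  then show "2 * sum a {1..i} < a (Suc i)"
    using a_pos a_growth by (cases "i = 0") auto
qed

lemma s_less_u: "2 * s < u"
  using a_growth[rule_format, of "n - 1"] n_ge_2 by (simp add: s_def u_def)

lemma s_pos: "0 < s"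
proof -
  have "a 1 \<le> s"
    unfolding s_def by (rule member_le_sum) (use n_ge_2 in auto)
  then show ?thesis
    using a_pos[rule_format, of 1] by simp
qed

lemma a_last_eq: "a (n+1) = s + 2 * u"
  using a_last by (simp add: s_def u_def)

lemma sum_upto_n: "sum a {1..n} = s + u"
proof -
  have "{1..n} = insert n {1..n-1}"
    using n_ge_2 by auto
  then show ?thesis
    using n_ge_2 by (simp add: s_def u_def add.commute)
qed

lemma sum_upto_Suc_n: "sum a {1..n+1} = s + u + a (n+1)"
  using sum_upto_n by simp

lemma Cset_eq: "Cset a n = subset_sums a (n + 1)"
  unfolding Cset_def subset_sums_def ..

lemma Cset_cases:
  assumes "c \<in> Cset a n"
  obtains p where "p \<in> subset_sums a (n - 1)" "p \<le> s"
    "c = p \<or> c = u + p \<or> c = s + 2 * u + p \<or> c = s + 3 * u + p"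
proof -
  have "subset_sums a (n + 1) = subset_sums a (n - 1) \<union> (\<lambda>x. u + x) ` subset_sums a (n - 1)
      \<union> (\<lambda>x. s + 2 * u + x) ` (subset_sums a (n - 1) \<union> (\<lambda>x. u + x) ` subset_sums a (n - 1))"
    using n_ge_2 subset_sums_Suc[of a n] subset_sums_Suc[of a "n - 1"] a_last_eq
    by (simp add: u_def)
  then show thesis
    using assms that subset_sums_le[of _ a "n - 1"]
    unfolding Cset_eq s_def[symmetric] by (auto simp: add.assoc)
qed

lemma Cset_le: "c \<in> Cset a n \<Longrightarrow> c \<le> 2 * s + 3 * u"
  by (elim Cset_cases) auto

lemma Cset_above_s: "c \<in> Cset a n \<Longrightarrow> s < c \<Longrightarrow> u \<le> c"
  by (elim Cset_cases) auto

lemma Cset_below_u: "c \<in> Cset a n \<Longrightarrow> c < u \<Longrightarrow> c \<in> subset_sums a (n - 1)"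
  by (elim Cset_cases) auto

lemma Cset_second_window:
  "c \<in> Cset a n \<Longrightarrow> u \<le> c \<Longrightarrow> c < s + 2 * u \<Longrightarrow> c - u \<in> subset_sums a (n - 1)"
  using s_less_u by (elim Cset_cases) auto

lemma Cset_third_window:
  "c \<in> Cset a n \<Longrightarrow> u + s < c \<Longrightarrow> c < s + 3 * u
    \<Longrightarrow> s + 2 * u \<le> c \<and> c - (s + 2 * u) \<in> subset_sums a (n - 1)"
  using s_less_u by (elim Cset_cases) auto

lemma Cset_high_length:
  assumes "\<forall>h\<in>set H. s < h" "subsums H \<subseteq> Cset a n"
  shows "length H \<le> 3"
proof (rule ccontr)
  assume "\<not> length H \<le> 3"
  have "\<forall>h\<in>set H. u \<le> h"
    using assms mem_subsums Cset_above_s by blast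
  then have "length H * u \<le> sum_list H"
    by (rule length_mult_le_sum_list)
  moreover have "4 * u \<le> length H * u"
    using \<open>\<not> length H \<le> 3\<close> by simp
  moreover have "sum_list H \<le> 2 * s + 3 * u"
    using assms(2) sum_list_in_subsums Cset_le by blast
  ultimately show False
    using s_less_u by linarith
qed

lemma Cset_low_length:
  assumes "\<forall>x\<in>set L. 0 < x \<and> x \<le> s" "subsums L \<subseteq> Cset a n"
  shows "length L \<le> n - 1"
proof -
  have "\<sigma> \<le> s" if "\<sigma> \<in> subsums L" for \<sigma>
    using subsums_below_gap[of L s] assms Cset_above_s s_less_u that
    by (metis (no_types, lifting) le_less_trans not_le subsetD)
  then have "subsums L \<subseteq> subset_sums a (n - 1)"
    using assms(2) Cset_below_u s_less_u by fastforce
  then show ?thesis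
    using superincreasing_subsums_length superincreasing_below assms(1) by blast
qed

text \<open>The assumed sums, reduced into the windows of \<open>C\<^sub>n\<close>, form the system excluded by
  \<open>superincreasing_sums_cover_absurd\<close>.\<close>
lemma Cset_three_high_one_low:
  assumes C: "x \<in> Cset a n" "h1 \<in> Cset a n" "h2 \<in> Cset a n" "h3 \<in> Cset a n"
      "h1 + h2 \<in> Cset a n" "x + h1 \<in> Cset a n" "x + h2 \<in> Cset a n" "h1 + h2 + h3 \<in> Cset a n"
    and x: "0 < x" "x \<le> s" and h: "s < h1" "s < h2" "s < h3"
  shows False
proof -
  have hu: "u \<le> h1" "u \<le> h2" "u \<le> h3"
    using C h Cset_above_s by blast+
  have "h1 + h2 + h3 \<le> 2 * s + 3 * u"
    using C(8) by (rule Cset_le)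
  note bounds = this hu x s_less_u
  let ?P = "subset_sums a (n - 1)"
  obtain X where X: "X \<subseteq> {1..n-1}" "x = sum a X"
    by (rule subset_sumsE[OF Cset_below_u[OF C(1)]]) (use bounds in linarith)
  obtain I1 where I1: "I1 \<subseteq> {1..n-1}" "h1 - u = sum a I1"
    by (rule subset_sumsE[OF Cset_second_window[OF C(2) hu(1)]]) (use bounds in linarith)
  obtain I2 where I2: "I2 \<subseteq> {1..n-1}" "h2 - u = sum a I2"
    by (rule subset_sumsE[OF Cset_second_window[OF C(3) hu(2)]]) (use bounds in linarith)
  obtain Y1 where Y1: "Y1 \<subseteq> {1..n-1}" "x + h1 - u = sum a Y1"
    by (rule subset_sumsE[OF Cset_second_window[OF C(6)]]) (use bounds in linarith)+
  obtain Y2 where Y2: "Y2 \<subseteq> {1..n-1}" "x + h2 - u = sum a Y2"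
    by (rule subset_sumsE[OF Cset_second_window[OF C(7)]]) (use bounds in linarith)+
  have "s + 2 * u \<le> h1 + h2 \<and> h1 + h2 - (s + 2 * u) \<in> ?P"
    by (rule Cset_third_window[OF C(5)]) (use bounds in linarith)+
  then obtain K where K: "K \<subseteq> {1..n-1}" "h1 + h2 - (s + 2 * u) = sum a K" "s + 2 * u \<le> h1 + h2"
    using subset_sumsE by blast
  have "X \<noteq> {}"
    using X(2) x(1) by auto
  moreover have "sum a X + sum a I1 = sum a Y1" "sum a X + sum a I2 = sum a Y2"
    using X I1 I2 Y1 Y2 bounds by simp_all
  moreover have "sum a I1 + sum a I2 = sum a {1..n-1} + sum a K"
    using I1 I2 K bounds unfolding s_def by linarith
  ultimately show False
    using superincreasing_sums_cover_absurd[OF superincreasing_below] X(1) I1(1) I2(1) Y1(1) Y2(1) K(1)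
    by blast
qed

theorem Cset_subsums_length:
  assumes pos: "\<forall>x\<in>set xs. 0 < x" and C: "subsums xs \<subseteq> Cset a n"
  shows "length xs \<le> n + 1"
proof -
  define L where "L = filter (\<lambda>x. x \<le> s) xs"
  define H where "H = filter (\<lambda>x. \<not> x \<le> s) xs"
  have len: "length xs = length L + length H"
    using sum_length_filter_compl[of "\<lambda>x. x \<le> s" xs] unfolding L_def H_def by linarith
  have CL: "subsums L \<subseteq> Cset a n" and CH: "subsums H \<subseteq> Cset a n"
    using C subsums_filter_subset unfolding L_def H_def by blast+
  have H3: "length H \<le> 3"
    using Cset_high_length[OF _ CH] by (simp add: H_def)
  have Ln: "length L \<le> n - 1"
    using Cset_low_length[OF _ CL] pos by (simp add: L_def)
  show ?thesis
  proof (cases "L = [] \<or> length H \<le> 2")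
    case True
    then show ?thesis
      using len H3 Ln n_ge_2 by auto
  next
    case False
    then obtain h1 h2 h3 where H: "H = [h1, h2, h3]"
      using H3 by (metis (no_types) Suc_leI length_0_conv length_Suc_conv not_le numeral_2_eq_2
          numeral_3_eq_3 le_antisym)
    obtain x where x: "x \<in> set L"
      using False by (metis list.set_intros(1) neq_Nil_conv)
    have xs: "x \<in> subsums L" "0 < x" "x \<le> s"
      using x mem_subsums pos unfolding L_def by auto
    have "\<forall>h\<in>set H. s < h"
      by (auto simp: H_def)
    then have hs: "s < h1" "s < h2" "s < h3"
      by (simp_all add: H)
    have "h1 \<in> subsums H" "h2 \<in> subsums H" "h3 \<in> subsums H" "h1 + h2 \<in> subsums H"
      "h1 + h2 + h3 \<in> subsums H"
      unfolding H by (auto simp: image_iff add.assoc)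
    moreover have "x + h \<in> subsums xs" if "h \<in> subsums H" for h
      using subsums_filter[OF xs(1)[unfolded L_def]] that unfolding H_def by (simp add: not_le)
    ultimately show ?thesis
      using Cset_three_high_one_low[OF _ _ _ _ _ _ _ _ xs(2,3) hs] C CH CL xs(1) by blast
  qed
qed

end

section \<open>Degrees of the factors of a product\<close>

lemma multiples_min_total_deg:
  assumes "\<forall>g\<in>M. d \<le> total_deg g" "w \<in> multiples N M"
  shows "d \<le> total_deg w"
  using assms total_deg_mono unfolding multiples_def by (blast intro: order_trans)

lemma obtain_min_total_deg:
  assumes "M \<noteq> {}"
  obtains g where "g \<in> M" "\<forall>w\<in>M. total_deg g \<le> total_deg w"
  using assms ex_has_least_nat[of "\<lambda>g. g \<in> M" _ total_deg] by blast

lemma multiples_plusE: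
  assumes "w \<in> multiples N (A + B)"
  obtains v v' where "v \<in> A" "v' \<in> B" "lookup (v + v') \<le> lookup w"
  using assms unfolding multiples_def set_plus_def by blast

lemma multiples_plus_min_deg:
  assumes w: "w \<in> multiples N (A + B)" "total_deg w \<le> dA + dB"
    and A: "\<forall>v\<in>A. dA \<le> total_deg v" and B: "\<forall>v\<in>B. dB \<le> total_deg v"
  obtains v v' where "v \<in> A" "v' \<in> B" "total_deg v = dA" "total_deg v' = dB"
    "lookup v \<le> lookup w" "lookup v' \<le> lookup w"
proof -
  obtain v v' where v: "v \<in> A" "v' \<in> B" "lookup (v + v') \<le> lookup w"
    using w(1) by (rule multiples_plusE)
  then have "total_deg v + total_deg v' \<le> dA + dB"
    using w(2) total_deg_mono[OF v(3)] by (simp add: total_deg_add)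
  moreover have "dA \<le> total_deg v" "dB \<le> total_deg v'"
    using A B v(1,2) by auto
  moreover have "lookup v \<le> lookup w" "lookup v' \<le> lookup w"
    using v(3) lookup_le_addD[of v v' w] lookup_le_addD[of v' v w] by (simp_all add: add.commute)
  ultimately show thesis
    using that v(1,2) by simp
qed

lemma pure_powers_split:
  assumes A: "in_vars N A" "A \<noteq> {}" and B: "in_vars N B" "B \<noteq> {}"
    and deg: "\<forall>w\<in>multiples N (A + B). d \<le> total_deg w"
    and X: "XY d 0 \<in> multiples N (A + B)" and Y: "XY 0 d \<in> multiples N (A + B)"
  obtains dA dB where "dA + dB = d"
    "XY dA 0 \<in> A" "XY 0 dA \<in> A" "XY dB 0 \<in> B" "XY 0 dB \<in> B"
    "\<forall>v\<in>A. dA \<le> total_deg v" "\<forall>v\<in>B. dB \<le> total_deg v"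
proof -
  obtain gA where gA: "gA \<in> A" "\<forall>v\<in>A. total_deg gA \<le> total_deg v"
    using obtain_min_total_deg[OF A(2)] by blast
  obtain gB where gB: "gB \<in> B" "\<forall>v\<in>B. total_deg gB \<le> total_deg v"
    using obtain_min_total_deg[OF B(2)] by blast
  define dA where "dA = total_deg gA"
  define dB where "dB = total_deg gB"
  have minA: "\<forall>v\<in>A. dA \<le> total_deg v" and minB: "\<forall>v\<in>B. dB \<le> total_deg v"
    using gA gB by (simp_all add: dA_def dB_def)
  have "gA + gB \<in> multiples N (A + B)"
    using gA(1) gB(1) by (intro multiples_base in_vars_plus A B) blast+
  then have "d \<le> dA + dB"
    using deg by (auto simp: dA_def dB_def total_deg_add)
  moreover have "dA + dB \<le> d"
  proof -
    obtain v v' where "v \<in> A" "v' \<in> B" "lookup (v + v') \<le> lookup (XY d 0)"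
      using X by (rule multiples_plusE)
    then show ?thesis
      using minA minB total_deg_mono[of "v + v'" "XY d 0"] by (fastforce simp: total_deg_add total_deg_XY)
  qed
  ultimately have d: "dA + dB = d"
    by simp
  have degXY: "total_deg (XY d 0) \<le> dA + dB" "total_deg (XY 0 d) \<le> dA + dB"
    by (simp_all add: d total_deg_XY)
  obtain vX vX' where "vX \<in> A" "vX' \<in> B" "total_deg vX = dA" "total_deg vX' = dB"
      "lookup vX \<le> lookup (XY d 0)" "lookup vX' \<le> lookup (XY d 0)"
    by (rule multiples_plus_min_deg[OF X degXY(1) minA minB])
  then have "XY dA 0 \<in> A" "XY dB 0 \<in> B"
    using lookup_le_X_power by metis+
  moreover obtain vY vY' where "vY \<in> A" "vY' \<in> B" "total_deg vY = dA" "total_deg vY' = dB"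
      "lookup vY \<le> lookup (XY 0 d)" "lookup vY' \<le> lookup (XY 0 d)"
    by (rule multiples_plus_min_deg[OF Y degXY(2) minA minB])
  then have "XY 0 dA \<in> A" "XY 0 dB \<in> B"
    using lookup_le_Y_power by metis+
  ultimately show thesis
    using that d minA minB by blast
qed

definition XY_front :: "nat \<Rightarrow> nat set \<Rightarrow> monomial set \<Rightarrow> bool" where
  "XY_front d C U \<longleftrightarrow> (\<forall>w\<in>U. d \<le> total_deg w) \<and> (\<forall>c. c \<in> C \<longleftrightarrow> c \<le> d \<and> XY (d - c) c \<in> U)"

lemma XY_front_factor:
  assumes A: "in_vars N A" "A \<noteq> {}" "0 \<notin> A" and B: "in_vars N B" "B \<noteq> {}"
    and front: "XY_front d C (multiples N (A + B))" and C: "0 \<in> C" "d \<in> C"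
  obtains dA dB CB where "0 < dA" "dA + dB = d" "XY_front dB CB (multiples N B)"
    "0 \<in> CB" "dB \<in> CB" "CB \<subseteq> C" "(\<lambda>c. dA + c) ` CB \<subseteq> C"
proof -
  let ?U = "multiples N (A + B)"
  have memC: "c \<in> C \<longleftrightarrow> c \<le> d \<and> XY (d - c) c \<in> ?U" for c
    using front unfolding XY_front_def by blast
  obtain dA dB where d: "dA + dB = d"
    and A_pure: "XY dA 0 \<in> A" "XY 0 dA \<in> A" and B_pure: "XY dB 0 \<in> B" "XY 0 dB \<in> B"
    and B_deg: "\<forall>v\<in>B. dB \<le> total_deg v"
    using pure_powers_split[OF A(1,2) B] front C memC[of 0] memC[of d] unfolding XY_front_def
    by (metis diff_zero diff_self_eq_0)
  have "0 < dA"
    using A_pure(1) A(3) by (metis XY_eq_0_iff neq0_conv)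
  define CB where "CB = {c. c \<le> dB \<and> XY (dB - c) c \<in> multiples N B}"
  have "XY_front dB CB (multiples N B)"
    unfolding XY_front_def CB_def using multiples_min_total_deg[OF B_deg] by blast
  moreover have "0 \<in> CB" "dB \<in> CB"
    unfolding CB_def using B_pure multiples_base[OF B(1)] by simp_all
  moreover have "c \<in> C" and "dA + c \<in> C" if c: "c \<in> CB" for c
  proof -
    have "c \<le> dB" "XY (dB - c) c \<in> multiples N B"
      using c unfolding CB_def by auto
    then have "XY dA 0 + XY (dB - c) c \<in> ?U" "XY 0 dA + XY (dB - c) c \<in> ?U"
      using multiples_plus multiples_base[OF A(1)] A_pure by blast+
    moreover have "d - (dA + c) = dB - c"
      using d by simp
    ultimately show "c \<in> C" "dA + c \<in> C"
      using memC \<open>c \<le> dB\<close> d by (simp_all add: XY_add)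
  qed
  ultimately show thesis
    using that \<open>0 < dA\<close> d by blast
qed

lemma Mon_atoms_product_degrees:
  assumes "\<forall>A\<in>set As. Mon_atom N (A :: 'k::field mpoly set)" "in_vars N M"
    "foldr (ideal_mult N) As (polyring N) = gen_ideal N (mono ` M)"
    "XY_front d C (multiples N M)" "0 \<in> C" "d \<in> C"
  shows "\<exists>xs. length xs = length As \<and> (\<forall>x\<in>set xs. 0 < x) \<and> subsums xs \<subseteq> C"
  using assms
proof (induction As arbitrary: M d C)
  case Nil
  then show ?case by simp
next
  case (Cons A As)
  obtain MA where A: "in_vars N MA" "MA \<noteq> {}" "0 \<notin> MA" "A = gen_ideal N (mono ` MA)"
    using Mon_atom_obtain Cons.prems(1) by auto
  obtain MB where B: "in_vars N MB" "MB \<noteq> {}" "foldr (ideal_mult N) As (polyring N) = gen_ideal N (mono ` MB)"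
    using foldr_ideal_mult_Mon[of As N] Cons.prems(1) unfolding Mon_atom_def by auto
  have "gen_ideal N (mono ` M) = ideal_mult N A (foldr (ideal_mult N) As (polyring N))"
    using Cons.prems(3) by simp
  also have "\<dots> = gen_ideal N (mono ` (MA + MB))"
    using A(4) B(3) ideal_mult_gen_ideal_monomials[OF A(1) B(1)] by simp
  finally have "multiples N M = multiples N (MA + MB)"
    using gen_ideal_monomials_eq_iff[OF Cons.prems(2) in_vars_plus[OF A(1) B(1)]] by blast
  then obtain dA dB CB where T: "0 < dA" "dA + dB = d" "XY_front dB CB (multiples N MB)"
    "0 \<in> CB" "dB \<in> CB" "CB \<subseteq> C" "(\<lambda>c. dA + c) ` CB \<subseteq> C"
    using XY_front_factor[OF A(1-3) B(1,2)] Cons.prems(4-6) by metis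
  obtain xs where xs: "length xs = length As" "\<forall>x\<in>set xs. 0 < x" "subsums xs \<subseteq> CB"
    using Cons.IH[OF _ B(1) B(3) T(3-5)] Cons.prems(1) by auto
  have "subsums (dA # xs) \<subseteq> C"
    using xs(3) T(6,7) by auto
  then show ?case
    using xs T(1) by (intro exI[of _ "dA # xs"]) auto
qed

section \<open>Atoms\<close>

lemma Mon_atom_gen_ideal_monomialsI:
  assumes G: "in_vars N G" "G \<noteq> {}" "0 \<notin> G"
    and no_split: "\<And>P Q. P \<in> Mon N - {polyring N} \<Longrightarrow> Q \<in> Mon N - {polyring N} \<Longrightarrow>
      (gen_ideal N (mono ` G) :: 'k::field mpoly set) = ideal_mult N P Q \<Longrightarrow> False"
  shows "Mon_atom N (gen_ideal N (mono ` G) :: 'k mpoly set)"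
  unfolding Mon_atom_def
  using gen_ideal_monomials_in_Mon[OF G(1,2)] gen_ideal_monomials_eq_polyring_iff[OF G(1)] G(3) no_split
  by blast

lemma Mon_split_pure_powers:
  assumes G: "in_vars N G" and deg: "\<forall>g\<in>G. d \<le> total_deg g" and X: "XY d 0 \<in> G" and Y: "XY 0 d \<in> G"
    and P: "P \<in> Mon N - {polyring N}" and Q: "Q \<in> Mon N - {polyring N}"
    and eq: "(gen_ideal N (mono ` G) :: 'k::field mpoly set) = ideal_mult N P Q"
  obtains MP MQ dP dQ where "in_vars N MP" "in_vars N MQ" "0 \<notin> MP" "0 \<notin> MQ"
    "multiples N G = multiples N (MP + MQ)" "0 < dP" "0 < dQ" "dP + dQ = d"
    "XY dP 0 \<in> MP" "XY 0 dP \<in> MP" "XY dQ 0 \<in> MQ" "XY 0 dQ \<in> MQ"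
proof -
  obtain MP where MP: "in_vars N MP" "MP \<noteq> {}" "P = gen_ideal N (mono ` MP)"
    using P Mon_obtain by blast
  obtain MQ where MQ: "in_vars N MQ" "MQ \<noteq> {}" "Q = gen_ideal N (mono ` MQ)"
    using Q Mon_obtain by blast
  have zero: "0 \<notin> MP" "0 \<notin> MQ"
    using P Q MP MQ gen_ideal_monomials_eq_polyring_iff[where 'k='k] by blast+
  have "(gen_ideal N (mono ` G) :: 'k mpoly set) = gen_ideal N (mono ` (MP + MQ))"
    using eq MP(3) MQ(3) ideal_mult_gen_ideal_monomials[OF MP(1) MQ(1), where 'k='k] by simp
  then have U: "multiples N G = multiples N (MP + MQ)"
    using gen_ideal_monomials_eq_iff[OF G in_vars_plus[OF MP(1) MQ(1)]] by blast
  obtain dP dQ where "dP + dQ = d" "XY dP 0 \<in> MP" "XY 0 dP \<in> MP" "XY dQ 0 \<in> MQ" "XY 0 dQ \<in> MQ"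
    using pure_powers_split[OF MP(1,2) MQ(1,2)] multiples_min_total_deg[OF deg]
      multiples_base[OF G X] multiples_base[OF G Y] U by metis
  moreover have "0 < dP" "0 < dQ"
    using calculation zero by (metis XY_eq_0_iff neq0_conv)+
  ultimately show thesis
    using that MP(1) MQ(1) zero U by blast
qed

lemma Mon_atom_pure_powers:
  assumes N: "2 \<le> N" and \<alpha>: "0 < \<alpha>"
  shows "Mon_atom N (gen_ideal N (mono ` {XY \<alpha> 0, XY 0 \<alpha>}) :: 'k::field mpoly set)"
proof (rule Mon_atom_gen_ideal_monomialsI)
  let ?G = "{XY \<alpha> 0, XY 0 \<alpha>}"
  show G: "in_vars N ?G"
    using keys_XY[OF N] by (auto simp: in_vars_def)
  show "?G \<noteq> {}" "0 \<notin> ?G"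
    using \<alpha> by (auto simp: zero_eq_XY_iff)
  fix P Q :: "'k mpoly set"
  assume PQ: "P \<in> Mon N - {polyring N}" "Q \<in> Mon N - {polyring N}"
    "gen_ideal N (mono ` ?G) = ideal_mult N P Q"
  have deg: "\<forall>g\<in>?G. \<alpha> \<le> total_deg g" and X: "XY \<alpha> 0 \<in> ?G" and Y: "XY 0 \<alpha> \<in> ?G"
    by (simp_all add: total_deg_XY)
  obtain MP MQ dP dQ where MPQ: "in_vars N MP" "in_vars N MQ" "0 \<notin> MP" "0 \<notin> MQ"
    and U: "multiples N ?G = multiples N (MP + MQ)" and d: "0 < dP" "0 < dQ" "dP + dQ = \<alpha>"
    and pure: "XY dP 0 \<in> MP" "XY 0 dP \<in> MP" "XY dQ 0 \<in> MQ" "XY 0 dQ \<in> MQ"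
    by (rule Mon_split_pure_powers[OF G deg X Y PQ])
  \<comment> \<open>\<open>X\<^sup>d\<^sup>PY\<^sup>d\<^sup>Q\<close> lies in the product but is divisible by neither generator\<close>
  have "XY dP 0 + XY 0 dQ \<in> multiples N (MP + MQ)"
    by (rule multiples_plus[OF multiples_base[OF MPQ(1) pure(1)] multiples_base[OF MPQ(2) pure(4)]])
  then have "XY dP dQ \<in> multiples N ?G"
    by (simp add: U XY_add)
  then obtain g where "g \<in> ?G" "lookup g \<le> lookup (XY dP dQ)"
    unfolding multiples_def by blast
  then show False
    using d by (auto simp only: insert_iff empty_iff lookup_le_XY_iff)
qed

context
  fixes N :: nat and G :: "monomial set" and S :: "nat set" and MA MB :: "monomial set"
    and d t b e1 e2 \<delta> :: nat
  assumes N: "2 \<le> N" and MA: "in_vars N MA" "0 \<notin> MA" and MB: "in_vars N MB"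
    and G: "G = (\<lambda>c. XY (d - c) c) ` S \<union> {XY e1 e2}"
    and U: "multiples N G = multiples N (MA + MB)"
    and d: "d = t + b" and gap: "\<forall>c\<in>S. c \<le> t \<or> b \<le> c"
    and e: "e1 + t < b" "e2 + t < b"
    and \<delta>: "\<delta> \<le> t" and pure: "XY \<delta> 0 \<in> MA" "XY 0 \<delta> \<in> MA"
begin

text \<open>In a divisor \<open>p q\<close> of
  the corner with \<open>p \<in> MA\<close>, both \<open>X\<^sup>\<delta>q\<close> and \<open>Y\<^sup>\<delta>q\<close> must be multiples of elements of \<open>G\<close>,
  which forces \<open>p = 1\<close>.\<close>

lemma corner_product_divisor: "v \<in> MA \<Longrightarrow> q \<in> MB \<Longrightarrow> \<exists>h\<in>G. lookup h \<le> lookup (v + q)"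
proof -
  assume "v \<in> MA" "q \<in> MB"
  then have "v + q \<in> multiples N G"
    using multiples_plus multiples_base MA(1) MB U by blast
  then show ?thesis
    unfolding multiples_def by blast
qed

lemma corner_share_Y_free:
  assumes q: "q \<in> MB" and pq: "lookup (p + q) \<le> lookup (XY e1 e2)"
  shows "lookup p 1 = 0"
proof -
  have pq_le: "lookup p k + lookup q k \<le> lookup (XY e1 e2) k" for k
    using pq by (simp add: le_fun_def lookup_add)
  obtain h where h: "h \<in> G" "lookup h \<le> lookup (XY \<delta> 0 + q)"
    using corner_product_divisor[OF pure(1) q] by blast
  then have h_le: "lookup h k \<le> lookup (XY \<delta> 0) k + lookup q k" for k
    by (simp add: le_fun_def lookup_add)
  show ?thesis
  proof (cases "h = XY e1 e2")
    case True
    then show ?thesis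
      using pq_le[of 1] h_le[of 1] by (simp add: lookup_XY)
  next
    case False
    then obtain c where c: "c \<in> S" "h = XY (d - c) c"
      using h(1) G by auto
    then have "c < b"
      using h_le[of 1] pq_le[of 1] e(2) by (simp add: lookup_XY)
    then have "c \<le> t"
      using gap c(1) by force
    moreover have "d - c \<le> \<delta> + lookup q 0"
      using h_le[of 0] c(2) by (simp add: lookup_XY)
    ultimately show ?thesis
      using pq_le[of 0] d \<delta> e(1) by (simp add: lookup_XY)
  qed
qed

lemma corner_share_X_free:
  assumes q: "q \<in> MB" and pq: "lookup (p + q) \<le> lookup (XY e1 e2)"
  shows "lookup p 0 = 0"
proof -
  have pq_le: "lookup p k + lookup q k \<le> lookup (XY e1 e2) k" for k
    using pq by (simp add: le_fun_def lookup_add)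
  obtain h where h: "h \<in> G" "lookup h \<le> lookup (XY 0 \<delta> + q)"
    using corner_product_divisor[OF pure(2) q] by blast
  then have h_le: "lookup h k \<le> lookup (XY 0 \<delta>) k + lookup q k" for k
    by (simp add: le_fun_def lookup_add)
  show ?thesis
  proof (cases "h = XY e1 e2")
    case True
    then show ?thesis
      using pq_le[of 0] h_le[of 0] by (simp add: lookup_XY)
  next
    case False
    then obtain c where c: "c \<in> S" "h = XY (d - c) c"
      using h(1) G by auto
    then have "c < b"
      using h_le[of 1] pq_le[of 1] e(2) \<delta> by (simp add: lookup_XY)
    then have "c \<le> t"
      using gap c(1) by force
    moreover have "d - c \<le> lookup q 0"
      using h_le[of 0] c(2) by (simp add: lookup_XY)
    ultimately show ?thesis
      using pq_le[of 0] d e(1) by (simp add: lookup_XY)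
  qed
qed

lemma corner_no_small_factor: False
proof -
  have "in_vars N G"
    unfolding G in_vars_def using keys_XY[OF N] by blast
  then have "XY e1 e2 \<in> multiples N (MA + MB)"
    using U G multiples_base by blast
  then obtain p q where pq: "p \<in> MA" "q \<in> MB" "lookup (p + q) \<le> lookup (XY e1 e2)"
    by (rule multiples_plusE)
  have "p = 0"
  proof (rule poly_mapping_eqI)
    fix k
    have "lookup p k \<le> lookup (XY e1 e2) k"
      using pq(3) by (simp add: le_fun_def lookup_add) (meson add_leD1)
    then show "lookup p k = lookup 0 k"
      using corner_share_X_free[OF pq(2,3)] corner_share_Y_free[OF pq(2,3)]
      by (cases "k = 0 \<or> k = 1") (auto simp: lookup_XY)
  qed
  then show False
    using pq(1) MA(2) by simp
qed

end

lemma front_corner_exponent: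
  assumes G: "G = (\<lambda>c. XY (d - c) c) ` S \<union> {XY e1 e2}" and S: "\<forall>c\<in>S. c \<le> d" and e: "d < e1 + e2"
    and c: "XY (d - c) c \<in> multiples N G" "c \<le> d"
  shows "c \<in> S"
proof -
  obtain g where g: "g \<in> G" "lookup g \<le> lookup (XY (d - c) c)"
    using c(1) unfolding multiples_def by blast
  show ?thesis
  proof (cases "g = XY e1 e2")
    case True
    then have "e1 \<le> d - c" "e2 \<le> c"
      using g(2) by (simp_all add: lookup_le_XY_iff)
    then show ?thesis
      using c(2) e by arith
  next
    case False
    then obtain c' where c': "c' \<in> S" "g = XY (d - c') c'"
      using g(1) unfolding G by auto
    then have "d - c' \<le> d - c" "c' \<le> c"
      using g(2) by (simp_all add: lookup_le_XY_iff)
    then have "c' = c"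
      using S c'(1) c(2) by force
    then show ?thesis
      using c'(1) by simp
  qed
qed

lemma Mon_atom_front_corner:
  assumes N: "2 \<le> N" and S: "\<forall>c\<in>S. c \<le> d" "0 \<in> S" "d \<in> S"
    and d: "d = t + b" and gap: "\<forall>c\<in>S. c \<le> t \<or> b \<le> c"
    and e: "e1 + t < b" "e2 + t < b" "d < e1 + e2"
  shows "Mon_atom N (gen_ideal N (mono ` ((\<lambda>c. XY (d - c) c) ` S \<union> {XY e1 e2})) :: 'k::field mpoly set)"
proof (rule Mon_atom_gen_ideal_monomialsI)
  define G where "G = (\<lambda>c. XY (d - c) c) ` S \<union> {XY e1 e2}"
  show ok: "in_vars N G"
    unfolding G_def in_vars_def using keys_XY[OF N] by blast
  show "G \<noteq> {}"
    unfolding G_def by blast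
  show "0 \<notin> G"
    unfolding G_def using S(1) e d by (auto simp: zero_eq_XY_iff)
  fix P Q :: "'k mpoly set"
  assume PQ: "P \<in> Mon N - {polyring N}" "Q \<in> Mon N - {polyring N}"
    "gen_ideal N (mono ` G) = ideal_mult N P Q"
  have deg: "\<forall>g\<in>G. d \<le> total_deg g"
    unfolding G_def using S(1) e(3) by (auto simp: total_deg_XY)
  have X: "XY d 0 \<in> G" and Y: "XY 0 d \<in> G"
    unfolding G_def using S(2,3) by force+
  obtain MP MQ dP dQ where MPQ: "in_vars N MP" "in_vars N MQ" "0 \<notin> MP" "0 \<notin> MQ"
    and U: "multiples N G = multiples N (MP + MQ)" and dPQ: "0 < dP" "0 < dQ" "dP + dQ = d"
    and pure: "XY dP 0 \<in> MP" "XY 0 dP \<in> MP" "XY dQ 0 \<in> MQ" "XY 0 dQ \<in> MQ"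
    by (rule Mon_split_pure_powers[OF ok deg X Y PQ])
  \<comment> \<open>\<open>X\<^sup>d\<^sup>QY\<^sup>d\<^sup>P\<close> lies in the product, so \<open>d\<^sub>P \<in> S\<close>, and by the gap one factor has degree \<open>\<le> t\<close>\<close>
  have "XY dQ 0 + XY 0 dP \<in> multiples N (MQ + MP)"
    by (rule multiples_plus[OF multiples_base[OF MPQ(2) pure(3)] multiples_base[OF MPQ(1) pure(2)]])
  then have "XY dQ dP \<in> multiples N G"
    by (simp add: U XY_add add.commute)
  moreover have "d - dP = dQ"
    using dPQ(3) by simp
  ultimately have "dP \<in> S"
    using front_corner_exponent[OF G_def S(1) e(3), of dP N] dPQ(3) by simp
  then have "dP \<le> t \<or> dQ \<le> t"
    using gap dPQ(3) d by force
  then show False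
  proof
    assume "dP \<le> t"
    show False
      by (rule corner_no_small_factor[OF N MPQ(1,3) MPQ(2) G_def U d gap e(1,2) \<open>dP \<le> t\<close> pure(1,2)])
  next
    assume "dQ \<le> t"
    have "multiples N G = multiples N (MQ + MP)"
      using U by (simp add: add.commute)
    then show False
      by (rule corner_no_small_factor[OF N MPQ(2,4) MPQ(1) G_def _ d gap e(1,2) \<open>dQ \<le> t\<close> pure(3,4)])
  qed
qed

section \<open>Explicit factorizations\<close>

text \<open>\<open>gens_C a K\<close> generates \<open>I\<^sub>C\<^sub>K\<close>, where \<open>C\<^sub>K\<close> consists of the subset sums of \<open>(a\<^sub>k)\<^sub>k\<^sub>\<in>\<^sub>K\<close>.\<close>
definition gens_C :: "(nat \<Rightarrow> nat) \<Rightarrow> nat set \<Rightarrow> monomial set" where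
  "gens_C a K = (\<lambda>L. XY (sum a (K - L)) (sum a L)) ` Pow K"

lemma gens_C_eq:
  assumes "finite K"
  shows "gens_C a K = (\<lambda>c. XY (sum a K - c) c) ` ((\<lambda>L. sum a L) ` Pow K)"
  unfolding gens_C_def image_image
proof (rule image_cong[OF refl])
  fix L assume "L \<in> Pow K"
  then have "finite L" "L \<subseteq> K"
    using assms finite_subset by auto
  then show "XY (sum a (K - L)) (sum a L) = XY (sum a K - sum a L) (sum a L)"
    by (simp add: sum_diff_nat)
qed

lemma in_vars_gens_C: "2 \<le> N \<Longrightarrow> in_vars N (gens_C a K)"
  unfolding gens_C_def by (rule in_vars_XY_image)

lemma gens_C_empty: "gens_C a {} = {0}"
  by (simp add: gens_C_def XY_def)

lemma gens_C_singleton: "gens_C a {i} = {XY (a i) 0, XY 0 (a i)}"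
  by (auto simp: gens_C_def Pow_insert)

lemma gens_C_Un:
  assumes fin: "finite K1" "finite K2" and disj: "K1 \<inter> K2 = {}"
  shows "gens_C a K1 + gens_C a K2 = gens_C a (K1 \<union> K2)"
proof -
  have add: "XY (sum a (K1 - L1)) (sum a L1) + XY (sum a (K2 - L2)) (sum a L2)
      = XY (sum a (K1 \<union> K2 - (L1 \<union> L2))) (sum a (L1 \<union> L2))" if "L1 \<subseteq> K1" "L2 \<subseteq> K2" for L1 L2
  proof -
    have "K1 \<union> K2 - (L1 \<union> L2) = (K1 - L1) \<union> (K2 - L2)"
      using that disj by blast
    moreover have "(K1 - L1) \<inter> (K2 - L2) = {}" "L1 \<inter> L2 = {}"
      using that disj by blast+
    ultimately show ?thesis
      using that fin by (simp add: XY_add sum.union_disjoint finite_subset)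
  qed
  show ?thesis
  proof
    show "gens_C a K1 + gens_C a K2 \<subseteq> gens_C a (K1 \<union> K2)"
      unfolding gens_C_def set_plus_def using add by blast
    show "gens_C a (K1 \<union> K2) \<subseteq> gens_C a K1 + gens_C a K2"
    proof
      fix g assume "g \<in> gens_C a (K1 \<union> K2)"
      then obtain L where L: "L \<subseteq> K1 \<union> K2" "g = XY (sum a (K1 \<union> K2 - L)) (sum a L)"
        unfolding gens_C_def by blast
      then have "L = (L \<inter> K1) \<union> (L \<inter> K2)"
        by blast
      then have "g = XY (sum a (K1 - L \<inter> K1)) (sum a (L \<inter> K1)) + XY (sum a (K2 - L \<inter> K2)) (sum a (L \<inter> K2))"
        using L(2) add[of "L \<inter> K1" "L \<inter> K2"] by simp
      then show "g \<in> gens_C a K1 + gens_C a K2"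
        unfolding gens_C_def by blast
    qed
  qed
qed

definition pair_ideal :: "nat \<Rightarrow> (nat \<Rightarrow> nat) \<Rightarrow> nat \<Rightarrow> ('k::field) mpoly set" where
  "pair_ideal N a i = gen_ideal N (mono ` gens_C a {i})"

lemma Mon_atom_pair_ideal: "2 \<le> N \<Longrightarrow> 0 < a i \<Longrightarrow> Mon_atom N (pair_ideal N a i :: 'k::field mpoly set)"
  unfolding pair_ideal_def gens_C_singleton by (rule Mon_atom_pure_powers)

lemma foldr_pair_ideals:
  assumes N: "2 \<le> N"
  shows "foldr (ideal_mult N) (map (pair_ideal N a) [l..<n+1]) (polyring N)
    = (gen_ideal N (mono ` gens_C a {l..n}) :: 'k::field mpoly set)"
proof (induction "n + 1 - l" arbitrary: l)
  case 0
  then have "[l..<n+1] = []" "{l..n} = {}"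
    by auto
  then show ?case
    by (simp add: polyring_eq_gen_ideal_zero gens_C_empty)
next
  case (Suc k)
  have l: "l < n + 1"
    using Suc.hyps(2) by simp
  then have "[l..<n+1] = l # [Suc l..<n+1]"
    by (simp add: upt_conv_Cons)
  have "foldr (ideal_mult N) (map (pair_ideal N a) [l..<n+1]) (polyring N)
      = ideal_mult N (pair_ideal N a l) (gen_ideal N (mono ` gens_C a {Suc l..n}) :: 'k mpoly set)"
    using \<open>[l..<n+1] = l # [Suc l..<n+1]\<close> Suc by simp
  also have "\<dots> = gen_ideal N (mono ` (gens_C a {l} + gens_C a {Suc l..n}))"
    unfolding pair_ideal_def by (rule ideal_mult_gen_ideal_monomials[OF in_vars_gens_C[OF N] in_vars_gens_C[OF N]])
  also have "gens_C a {l} + gens_C a {Suc l..n} = gens_C a {l..n}"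
    using gens_C_Un[of "{l}" "{Suc l..n}" a] l by (simp add: atLeastAtMost_insertL)
  finally show ?case .
qed

locale Cn_setup = Cn_weights +
  fixes N :: nat
  assumes N_ge_2: "2 \<le> N"
begin

lemma ICn_eq: "ICn N a n = (gen_ideal N (mono ` gens_C a {1..n+1}) :: 'k::field mpoly set)"
proof -
  have "((\<lambda>c. monoXY (sum a {1..n+1} - c) c) ` Cset a n :: 'k mpoly set)
      = mono ` ((\<lambda>c. XY (sum a {1..n+1} - c) c) ` Cset a n)"
    unfolding monoXY_def XY_def image_image ..
  also have "(\<lambda>c. XY (sum a {1..n+1} - c) c) ` Cset a n = gens_C a {1..n+1}"
    unfolding Cset_def by (rule gens_C_eq[symmetric]) simp
  finally show ?thesis
    unfolding ICn_def by simp
qed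

definition corner_exp :: "nat \<Rightarrow> nat" where
  "corner_exp j = a (n+1) - sum a {1..j} - 1"

text \<open>The factor \<open>A\<^sub>j\<close>: the ideal \<open>I\<^sub>C\<^sub>K\<close> for \<open>K = {1..j, n+1}\<close> plus the corner \<open>X\<^sup>eY\<^sup>e\<close>, which is
  just low enough to keep \<open>A\<^sub>j\<close> from factoring and just high enough to disappear in the product.\<close>
definition corner_ideal :: "nat \<Rightarrow> 'k::field mpoly set" where
  "corner_ideal j = gen_ideal N
    (mono ` (gens_C a (insert (n+1) {1..j}) \<union> {XY (corner_exp j) (corner_exp j)}))"

definition factorization :: "nat \<Rightarrow> 'k::field mpoly set list" where
  "factorization j = corner_ideal j # map (pair_ideal N a) [j+1..<n+1]"

lemma sum_upto_le_s: "j \<le> n - 1 \<Longrightarrow> sum a {1..j} \<le> s"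
  unfolding s_def by (rule sum_mono2) auto

text \<open>The witness is \<open>L \<union> {n}\<close> if \<open>n \<notin> L\<close>, and \<open>{n + 1}\<close> otherwise.\<close>
lemma corner_times_gen_divisible:
  assumes j: "j \<le> n - 1" and L: "L \<subseteq> {j+1..n}"
  defines "e \<equiv> corner_exp j" and "D \<equiv> sum a {j+1..n}" and "l \<equiv> sum a L"
  shows "\<exists>M\<subseteq>{1..n+1}. lookup (XY (sum a ({1..n+1} - M)) (sum a M)) \<le> lookup (XY (e + (D - l)) (e + l))"
proof -
  define t where "t = sum a {1..j}"
  have "{1..n} = {1..j} \<union> {j+1..n}" "{1..j} \<inter> {j+1..n} = {}"
    using j by auto
  then have tD: "t + D = s + u"
    using sum_upto_n sum.union_disjoint[of "{1..j}" "{j+1..n}" a] unfolding t_def D_def by simp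
  have ts: "t \<le> s"
    using sum_upto_le_s[OF j] by (simp add: t_def)
  have e: "e = a (n+1) - t - 1"
    by (simp add: e_def corner_exp_def t_def)
  have fL: "finite L"
    using L finite_subset by blast
  have lD: "l \<le> D"
    unfolding l_def D_def using L by (intro sum_mono2) auto
  show ?thesis
  proof (cases "n \<in> L")
    case False
    have sub: "insert n L \<subseteq> {1..n+1}"
      using L n_ge_2 by auto
    have "sum a (insert n L) = u + l"
      using False fL by (simp add: u_def l_def)
    moreover have "sum a ({1..n+1} - insert n L) = sum a {1..n+1} - (u + l)"
      using sub fL calculation by (simp add: sum_diff_nat)
    ultimately show ?thesis
      using sub e tD ts lD s_less_u a_last_eq sum_upto_Suc_n
      by (intro exI[of _ "insert n L"]) (simp add: lookup_le_XY_iff; arith)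
  next
    case True
    have "u \<le> l"
      unfolding u_def l_def by (rule member_le_sum) (use True fL in auto)
    moreover have "{1..n+1} - {n+1} = {1..n}"
      by auto
    ultimately show ?thesis
      using e tD ts lD s_less_u a_last_eq sum_upto_n
      by (intro exI[of _ "{n+1}"]) (simp add: lookup_le_XY_iff; arith)
  qed
qed

lemma corner_absorbed:
  assumes j: "j \<le> n - 1" and g: "g \<in> gens_C a {j+1..n}"
  shows "XY (corner_exp j) (corner_exp j) + g \<in> multiples N (gens_C a {1..n+1})"
proof -
  obtain L where L: "L \<subseteq> {j+1..n}" "g = XY (sum a ({j+1..n} - L)) (sum a L)"
    using g unfolding gens_C_def by blast
  then have "XY (corner_exp j) (corner_exp j) + g
      = XY (corner_exp j + (sum a {j+1..n} - sum a L)) (corner_exp j + sum a L)"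
    using finite_subset[OF L(1)] by (simp add: XY_add sum_diff_nat)
  then show ?thesis
    using corner_times_gen_divisible[OF j L(1)] keys_XY[OF N_ge_2]
    unfolding multiples_def gens_C_def by auto
qed

lemma Mon_atom_corner_ideal:
  assumes j: "j \<le> n - 1"
  shows "Mon_atom N (corner_ideal j :: 'k::field mpoly set)"
proof -
  define K where "K = insert (n+1) {1..j}"
  define t where "t = sum a {1..j}"
  define b where "b = a (n+1)"
  define S where "S = (\<lambda>L. sum a L) ` Pow K"
  define e where "e = corner_exp j"
  have fK: "finite K"
    by (simp add: K_def)
  have ts: "t \<le> s"
    using sum_upto_le_s[OF j] by (simp add: t_def)
  have d: "sum a K = t + b"
    using j by (simp add: K_def t_def b_def)
  have e: "e = b - t - 1"
    by (simp add: e_def corner_exp_def t_def b_def)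
  have "\<forall>c\<in>S. c \<le> sum a K"
    unfolding S_def using fK by (auto intro: sum_mono2)
  moreover have "0 \<in> S" "sum a K \<in> S"
    unfolding S_def by force+
  moreover have "\<forall>c\<in>S. c \<le> t \<or> b \<le> c"
    unfolding S_def K_def t_def b_def using sum_subset_insert_cases[of "{1..j}"] by blast
  moreover have "e + t < b" "sum a K < e + e"
    using e d ts s_less_u s_pos a_last_eq by (simp_all add: b_def)
  ultimately have "Mon_atom N (gen_ideal N (mono ` ((\<lambda>c. XY (sum a K - c) c) ` S \<union> {XY e e})) :: 'k mpoly set)"
    using Mon_atom_front_corner[OF N_ge_2 _ _ _ d] by blast
  then show ?thesis
    unfolding corner_ideal_def gens_C_eq[OF fK] K_def[symmetric] S_def e_def .
qed

lemma factorization_prod: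
  assumes j: "j \<le> n - 1"
  shows "foldr (ideal_mult N) (factorization j) (polyring N) = (ICn N a n :: 'k::field mpoly set)"
proof -
  define K where "K = insert (n+1) {1..j}"
  define E where "E = XY (corner_exp j) (corner_exp j)"
  have in_vars: "in_vars N (gens_C a K \<union> {E})" "in_vars N (gens_C a {j+1..n})"
    using in_vars_gens_C[OF N_ge_2] keys_XY[OF N_ge_2] by (auto simp: in_vars_def E_def)
  have "gens_C a K + gens_C a {j+1..n} = gens_C a {1..n+1}"
    using gens_C_Un[of K "{j+1..n}" a] j n_ge_2 by (auto simp: K_def intro!: arg_cong[of _ _ "gens_C a"])
  then have sum: "(gens_C a K \<union> {E}) + gens_C a {j+1..n} = gens_C a {1..n+1} \<union> (\<lambda>g. E + g) ` gens_C a {j+1..n}"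
    by (simp add: insert_set_plus)
  have "foldr (ideal_mult N) (factorization j) (polyring N)
      = ideal_mult N (corner_ideal j) (gen_ideal N (mono ` gens_C a {j+1..n}) :: 'k mpoly set)"
    unfolding factorization_def using foldr_pair_ideals[OF N_ge_2, of a "j+1" n, where 'k='k]
    by (simp del: upt_Suc)
  also have "\<dots> = gen_ideal N (mono ` (gens_C a {1..n+1} \<union> (\<lambda>g. E + g) ` gens_C a {j+1..n}))"
    unfolding corner_ideal_def K_def[symmetric] E_def[symmetric] sum[symmetric]
    by (rule ideal_mult_gen_ideal_monomials[OF in_vars])
  also have "\<dots> = gen_ideal N (mono ` gens_C a {1..n+1})"
  proof -
    have "multiples N (gens_C a {1..n+1} \<union> (\<lambda>g. E + g) ` gens_C a {j+1..n}) = multiples N (gens_C a {1..n+1})"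
      using corner_absorbed[OF j] by (intro multiples_absorb) (auto simp: E_def)
    then show ?thesis
      using gen_ideal_monomials_eq_iff in_vars_plus[OF in_vars] in_vars_gens_C[OF N_ge_2] sum by metis
  qed
  finally show ?thesis
    by (simp add: ICn_eq)
qed

lemma factorization_atoms:
  assumes "j \<le> n - 1"
  shows "\<forall>A\<in>set (factorization j). Mon_atom N (A :: 'k::field mpoly set)"
proof -
  have "Mon_atom N (pair_ideal N a i :: 'k mpoly set)" if "i \<in> set [j+1..<n+1]" for i
    using that a_pos by (intro Mon_atom_pair_ideal[OF N_ge_2]) auto
  then show ?thesis
    unfolding factorization_def using Mon_atom_corner_ideal[OF assms] by (auto simp del: upt_Suc)
qed

lemma length_factorization: "j \<le> n - 1 \<Longrightarrow> length (factorization j) = n + 1 - j"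
  unfolding factorization_def using n_ge_2 by (simp del: upt_Suc)

lemma Mon_lengths_lower: "{2..n+1} \<subseteq> Mon_lengths N (ICn N a n :: 'k::field mpoly set)"
proof
  fix k assume k: "k \<in> {2..n+1}"
  then have j: "n + 1 - k \<le> n - 1"
    by auto
  then have "\<forall>A\<in>set (factorization (n + 1 - k)). Mon_atom N (A :: 'k mpoly set)"
      "ICn N a n = foldr (ideal_mult N) (factorization (n + 1 - k)) (polyring N :: 'k mpoly set)"
    using factorization_atoms factorization_prod[symmetric] by blast+
  moreover have "length (factorization (n + 1 - k) :: 'k mpoly set list) = k"
    using length_factorization[OF j] k by simp
  ultimately show "k \<in> Mon_lengths N (ICn N a n :: 'k mpoly set)"
    unfolding Mon_lengths_def by blast
qed

lemma ICn_not_Mon_atom: "\<not> Mon_atom N (ICn N a n :: 'k::field mpoly set)"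
proof
  assume atom: "Mon_atom N (ICn N a n :: 'k mpoly set)"
  have F: "factorization (n - 1) = [corner_ideal (n - 1), pair_ideal N a n :: 'k mpoly set]"
    unfolding factorization_def using n_ge_2 by (simp add: upt_conv_Cons)
  then have atoms: "Mon_atom N (corner_ideal (n - 1) :: 'k mpoly set)" "Mon_atom N (pair_ideal N a n :: 'k mpoly set)"
    using factorization_atoms[of "n - 1", where 'k='k] by simp_all
  obtain M where M: "in_vars N M" "pair_ideal N a n = (gen_ideal N (mono ` M) :: 'k mpoly set)"
    using Mon_atom_obtain[OF atoms(2)] by metis
  then have "ideal_mult N (pair_ideal N a n) (polyring N) = (pair_ideal N a n :: 'k mpoly set)"
    using ideal_mult_polyring[OF M(1)] by simp
  then have "ICn N a n = ideal_mult N (corner_ideal (n - 1)) (pair_ideal N a n :: 'k mpoly set)"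
    using factorization_prod[of "n - 1", where 'k='k] F by simp
  then show False
    using atom atoms unfolding Mon_atom_def by blast
qed

lemma Cset_le_sum: "c \<in> Cset a n \<Longrightarrow> c \<le> sum a {1..n+1}"
  unfolding Cset_eq by (rule subset_sums_le)

lemma gens_C_Cset: "gens_C a {1..n+1} = (\<lambda>c. XY (sum a {1..n+1} - c) c) ` Cset a n"
  unfolding Cset_def by (rule gens_C_eq) simp

lemma XY_front_ICn: "XY_front (sum a {1..n+1}) (Cset a n) (multiples N (gens_C a {1..n+1}))"
  unfolding XY_front_def
proof (intro conjI allI)
  let ?\<mu> = "sum a {1..n+1}"
  have "\<forall>g\<in>gens_C a {1..n+1}. ?\<mu> \<le> total_deg g"
    unfolding gens_C_Cset using Cset_le_sum by (auto simp: total_deg_XY)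
  then show "\<forall>w\<in>multiples N (gens_C a {1..n+1}). ?\<mu> \<le> total_deg w"
    using multiples_min_total_deg by blast
  fix c
  show "c \<in> Cset a n \<longleftrightarrow> c \<le> ?\<mu> \<and> XY (?\<mu> - c) c \<in> multiples N (gens_C a {1..n+1})"
  proof
    assume "c \<in> Cset a n"
    then show "c \<le> ?\<mu> \<and> XY (?\<mu> - c) c \<in> multiples N (gens_C a {1..n+1})"
      using Cset_le_sum multiples_base[OF in_vars_gens_C[OF N_ge_2], of _ a "{1..n+1}"]
      unfolding gens_C_Cset by auto
  next
    assume c: "c \<le> ?\<mu> \<and> XY (?\<mu> - c) c \<in> multiples N (gens_C a {1..n+1})"
    then obtain c' where c': "c' \<in> Cset a n" "lookup (XY (?\<mu> - c') c') \<le> lookup (XY (?\<mu> - c) c)"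
      unfolding multiples_def gens_C_Cset by blast
    then have "?\<mu> - c' \<le> ?\<mu> - c" "c' \<le> c"
      by (simp_all only: lookup_le_XY_iff)
    then have "c' = c"
      using c Cset_le_sum[OF c'(1)] by arith
    then show "c \<in> Cset a n"
      using c'(1) by simp
  qed
qed

lemma ICn_ne_polyring: "ICn N a n \<noteq> (polyring N :: 'k::field mpoly set)"
proof -
  have "0 < sum a {1..n+1}"
    using a_pos member_le_sum[of 1 "{1..n+1}" a] by fastforce
  then have "0 \<notin> gens_C a {1..n+1}"
    unfolding gens_C_Cset using Cset_le_sum by (auto simp: zero_eq_XY_iff)
  then show ?thesis
    using gen_ideal_monomials_eq_polyring_iff[OF in_vars_gens_C[OF N_ge_2], where 'k='k]
    by (simp add: ICn_eq)
qed

lemma Mon_lengths_upper: "Mon_lengths N (ICn N a n :: 'k::field mpoly set) \<subseteq> {2..n+1}"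
proof
  fix k assume "k \<in> Mon_lengths N (ICn N a n :: 'k mpoly set)"
  then obtain As where As: "length As = k" "\<forall>A\<in>set As. Mon_atom N (A :: 'k mpoly set)"
      "foldr (ideal_mult N) As (polyring N) = ICn N a n"
    unfolding Mon_lengths_def by auto
  have "0 \<in> Cset a n" "sum a {1..n+1} \<in> Cset a n"
    unfolding Cset_def by force+
  then obtain xs where "length xs = k" "\<forall>x\<in>set xs. 0 < x" "subsums xs \<subseteq> Cset a n"
    using Mon_atoms_product_degrees[OF As(2) in_vars_gens_C[OF N_ge_2] _ XY_front_ICn] As(1,3)
    by (metis ICn_eq)
  then have "k \<le> n + 1"
    using Cset_subsums_length by blast
  moreover have "k \<noteq> 0"
    using As ICn_ne_polyring by auto
  moreover have "k \<noteq> 1"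
  proof
    assume "k = 1"
    then obtain A where A: "As = [A]"
      using As(1) by (auto simp: length_Suc_conv)
    then obtain MA where MA: "in_vars N MA" "A = (gen_ideal N (mono ` MA) :: 'k mpoly set)"
      using As(2) Mon_atom_obtain by (metis list.set_intros(1))
    then have "ICn N a n = A"
      using As(3) A ideal_mult_polyring[OF MA(1), where 'k='k] by simp
    then show False
      using ICn_not_Mon_atom[where 'k='k] As(2) A by simp
  qed
  ultimately show "k \<in> {2..n+1}"
    by auto
qed

end

theorem corollary4p8:
  fixes N n :: nat and a :: "nat \<Rightarrow> nat"
  assumes "N \<ge> 2" and "n \<ge> 2"
    and "\<forall>i\<in>{1..n+1}. a i > 0"
    and "a (n+1) = sum a {1..n-1} + 2 * a n"
    and "\<forall>i\<in>{1..n-1}. a (i+1) > 2 * sum a {1..i}"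
  shows "Mon_lengths N (ICn N a n :: ('k::field) mpoly set) = {2..n+1}"
proof -
  interpret Cn_setup a n N
    using assms by unfold_locales auto
  show ?thesis
    using Mon_lengths_upper Mon_lengths_lower by blast
qed

end
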